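(* Let $W\in C^{1}(\mathbb{R})$ satisfy (W-i) there is $\eta>0$ with $W(s)\geq\eta s^2$ for $|s|\leq1$ and $W(s)\geq\eta$ for $|s|\geq1$; (W-ii) $W''(0)=1$; (W-iii) there are $M>0$, $\alpha\in[0,2)$ with $W(s)\leq M|s|^\alpha$ for all $s\geq0$. Let $\delta>0$ and let $\mathbf{u}_\delta=(u_\delta,v_\delta)\in X=H^2(\mathbb{R})\times L^2(\mathbb{R})$ be a minimizer (over $\{\mathbf{u}\in X: C(\mathbf{u})\neq0\}$) of $J_\delta(\mathbf{u})=\frac{E(\mathbf{u})}{|C(\mathbf{u})|}+\delta E(\mathbf{u})$, i.e. a hylomorphic soliton as produced for the nonlinear beam equation in the paper's existence theorem. Then the solution of $\partial_t^2u+\partial_x^4u+W'(u)=0$ with initial data $(u_\delta,v_\delta)$ has the form $u(t,x)=u_\delta(x-ct)$, where $u_\delta$ solves $$\frac{d^4u_\delta}{dx^4}+c^2\frac{d^2u_\delta}{dx^2}+W'(u_\delta)=0$$ and $c$ is a constant depending on $\mathbf{u}_\delta$.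
   Context: Here $E(\mathbf{u})=\frac12\int(v^2+u_{xx}^2)\,dx+\int W(u)\,dx$ and $C(\mathbf{u})=-\int v\,u_x\,dx$ for $\mathbf{u}=(u,v)\in X$; the first component of the phase-space point is the displacement $u$ and the second is $v=\partial_t u$. *)

theory Defs
  imports "HOL-Analysis.Analysis"
begin

definition L2fun :: "(real \<Rightarrow> real) \<Rightarrow> bool" where
  "L2fun f \<longleftrightarrow> f \<in> borel_measurable lborel \<and> integrable lborel (\<lambda>x. (f x)\<^sup>2)"

text \<open>w is a second (weak) derivative of u: u is differentiable everywhere with an L^2
  derivative u1, and u1 is absolutely continuous with a.e. derivative w.\<close>
definition is_d2 :: "(real \<Rightarrow> real) \<Rightarrow> (real \<Rightarrow> real) \<Rightarrow> bool" where
  "is_d2 u w \<longleftrightarrow> (\<exists>u1. (\<forall>x. (u has_real_derivative u1 x) (at x)) \<and> L2fun u1 \<and>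
       (\<forall>x. u1 x = u1 0 + (LBINT t=0..x. w t)))"

text \<open>H^2(R), identifying each class with its C^1 representative.\<close>
definition H2 :: "(real \<Rightarrow> real) set" where
  "H2 = {u. L2fun u \<and> (\<exists>w. L2fun w \<and> is_d2 u w)}"

definition uxx :: "(real \<Rightarrow> real) \<Rightarrow> real \<Rightarrow> real" where
  "uxx u = (SOME w. L2fun w \<and> is_d2 u w)"

definition energy :: "(real \<Rightarrow> real) \<Rightarrow> (real \<Rightarrow> real) \<Rightarrow> (real \<Rightarrow> real) \<Rightarrow> real" where
  "energy W u v = (1/2) * (LINT x|lborel. (v x)\<^sup>2 + (uxx u x)\<^sup>2) + (LINT x|lborel. W (u x))"

definition momentum :: "(real \<Rightarrow> real) \<Rightarrow> (real \<Rightarrow> real) \<Rightarrow> real" where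
  "momentum u v = - (LINT x|lborel. v x * deriv u x)"

definition Jdelta :: "real \<Rightarrow> (real \<Rightarrow> real) \<Rightarrow> (real \<Rightarrow> real) \<Rightarrow> (real \<Rightarrow> real) \<Rightarrow> real" where
  "Jdelta \<delta> W u v = energy W u v / \<bar>momentum u v\<bar> + \<delta> * energy W u v"

definition diff_upto :: "nat \<Rightarrow> (real \<Rightarrow> real) \<Rightarrow> bool" where
  "diff_upto k f \<longleftrightarrow> (\<forall>j<k. \<forall>x. ((deriv ^^ j) f has_real_derivative (deriv ^^ Suc j) f x) (at x))"

definition beam_solution :: "(real \<Rightarrow> real) \<Rightarrow> (real \<Rightarrow> real \<Rightarrow> real) \<Rightarrow> bool" where
  "beam_solution W U \<longleftrightarrow> (\<forall>x. diff_upto 2 (\<lambda>t. U t x)) \<and> (\<forall>t. diff_upto 4 (\<lambda>x. U t x)) \<and>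
     (\<forall>t x. (deriv ^^ 2) (\<lambda>s. U s x) t + (deriv ^^ 4) (\<lambda>y. U t y) x + deriv W (U t x) = 0)"

end

theory Submission
  imports Defs
begin

text \<open>Fermat's rule along any curve through
  \<open>(u, v)\<close> gives \<open>dE = c dC\<close> with \<open>c = E / (C (1 + \<delta> \<bar>C\<bar>))\<close>. Varying \<open>v\<close> in a direction \<open>g\<close>
  gives \<open>\<integral> v g = - c \<integral> g u'\<close>, and \<open>g = v + c u'\<close> yields \<open>v = - c u'\<close>. Varying \<open>u\<close> in a compactly
  supported direction \<open>h\<close> then gives the weak equation \<open>\<integral> u'' h'' + \<integral> W'(u) h = c\<^sup>2 \<integral> u' h'\<close>.
  Testing it with quadratic B-splines, whose second derivatives are step functions, shows that
  \<open>u' + F + c\<^sup>2 U\<close> has vanishing third differences, where \<open>F''' = W'(u)\<close> and \<open>U' = u\<close>; being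
  continuous, it is a quadratic polynomial. Hence \<open>u\<close> is four times differentiable with
  \<open>u'''' + c\<^sup>2 u'' + W'(u) = 0\<close>, and \<open>u(x - c t)\<close> solves the beam equation with initial velocity
  \<open>- c u' = v\<close>.\<close>

section \<open>Square-integrable functions on the line\<close>

lemma integrable_mult_L2fun:
  assumes "L2fun f" "L2fun g"
  shows "integrable lborel (\<lambda>x. f x * g x)"
proof (rule Bochner_Integration.integrable_bound[of _ "\<lambda>x. (f x)\<^sup>2 + (g x)\<^sup>2"])
  show "integrable lborel (\<lambda>x. (f x)\<^sup>2 + (g x)\<^sup>2)"
    using assms unfolding L2fun_def by auto
  show "(\<lambda>x. f x * g x) \<in> borel_measurable lborel"
    using assms unfolding L2fun_def by auto
  have "\<bar>f x * g x\<bar> \<le> (f x)\<^sup>2 + (g x)\<^sup>2" for x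
    using sum_squares_bound[of "\<bar>f x\<bar>" "\<bar>g x\<bar>"] abs_ge_zero[of "f x * g x"]
    unfolding abs_mult power2_abs mult.assoc by linarith
  then show "AE x in lborel. norm (f x * g x) \<le> norm ((f x)\<^sup>2 + (g x)\<^sup>2)"
    by simp
qed

lemma L2fun_add: "L2fun f \<Longrightarrow> L2fun g \<Longrightarrow> L2fun (\<lambda>x. f x + g x)"
  using integrable_mult_L2fun[of f g]
  by (auto simp: L2fun_def power2_sum mult.assoc)

lemma L2fun_cmult: "L2fun f \<Longrightarrow> L2fun (\<lambda>x. c * f x)"
  unfolding L2fun_def by (auto simp: power_mult_distrib)

lemma L2fun_diff: "L2fun f \<Longrightarrow> L2fun g \<Longrightarrow> L2fun (\<lambda>x. f x - g x)"
  using L2fun_add[of f "\<lambda>x. (-1) * g x"] L2fun_cmult[of g "-1"] by simp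

lemma L2fun_mult_bounded:
  assumes "L2fun f" and [measurable]: "g \<in> borel_measurable borel" and "\<And>x. \<bar>g x\<bar> \<le> C"
  shows "L2fun (\<lambda>x. f x * g x)"
  unfolding L2fun_def
proof
  have [measurable]: "f \<in> borel_measurable borel" using assms(1) unfolding L2fun_def by simp
  show "(\<lambda>x. f x * g x) \<in> borel_measurable lborel" by measurable
  have bound: "(g x)\<^sup>2 * (f x)\<^sup>2 \<le> C\<^sup>2 * (f x)\<^sup>2" for x
    using power_mono[OF assms(3)[of x] abs_ge_zero, of 2] by (intro mult_right_mono) auto
  show "integrable lborel (\<lambda>x. (f x * g x)\<^sup>2)"
    by (rule Bochner_Integration.integrable_bound[of lborel "\<lambda>x. C\<^sup>2 * (f x)\<^sup>2"])
       (use assms(1) bound in \<open>auto simp: L2fun_def power_mult_distrib mult.commute[of "(f _)\<^sup>2"]\<close>)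
qed

lemma set_integrable_bounded:
  fixes f :: "real \<Rightarrow> real"
  assumes [measurable]: "f \<in> borel_measurable borel" and "\<And>x. x \<in> {a..b} \<Longrightarrow> \<bar>f x\<bar> \<le> C"
  shows "set_integrable lborel {a..b} f"
  unfolding set_integrable_def
proof (rule Bochner_Integration.integrable_bound[of _ "\<lambda>x. C * indicator {a..b} x"])
  show "integrable lborel (\<lambda>x. C * indicat_real {a..b} x)"
    using borel_integrable_atLeastAtMost'[of a b "\<lambda>_. C"]
    by (simp add: set_integrable_def mult.commute)
  show "AE x in lborel. norm (indicat_real {a..b} x *\<^sub>R f x) \<le> norm (C * indicat_real {a..b} x)"
    using assms(2) by (intro AE_I2) (force simp: indicator_def)
qed simp

lemma set_integrable_L2fun:
  assumes "L2fun f"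
  shows "set_integrable lborel {a..b} f"
proof -
  have "(\<lambda>x. (indicator {a..b} x)\<^sup>2) = (indicator {a..b} :: real \<Rightarrow> real)"
    by (auto simp: indicator_def)
  then have "L2fun (indicator {a..b} :: real \<Rightarrow> real)"
    using borel_integrable_atLeastAtMost'[of a b "\<lambda>_. 1::real"]
    by (simp add: L2fun_def set_integrable_def)
  then show ?thesis
    using integrable_mult_L2fun[OF _ assms] by (simp add: set_integrable_def)
qed

lemma interval_integrable_of_set_integrable:
  assumes "\<And>a b. set_integrable lborel {a..b} f"
  shows "interval_lebesgue_integrable lborel (ereal a) (ereal b) f"
  using assms[of a b] assms[of b a]
  by (auto simp: interval_lebesgue_integrable_def einterval_iff intro: set_integrable_subset)

lemma interval_integrable_L2fun:
  "L2fun f \<Longrightarrow> interval_lebesgue_integrable lborel (ereal a) (ereal b) f"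
  by (intro interval_integrable_of_set_integrable set_integrable_L2fun)

lemma interval_integrable_bounded:
  fixes f :: "real \<Rightarrow> real"
  assumes "f \<in> borel_measurable borel" and "\<And>x. \<bar>f x\<bar> \<le> C"
  shows "interval_lebesgue_integrable lborel (ereal a) (ereal b) f"
  by (intro interval_integrable_of_set_integrable set_integrable_bounded[where C=C] assms)

lemma L2fun_bounded_support:
  fixes f :: "real \<Rightarrow> real"
  assumes [measurable]: "f \<in> borel_measurable borel"
    and supp: "\<And>x. x \<notin> {a..b} \<Longrightarrow> f x = 0" and bound: "\<And>x. \<bar>f x\<bar> \<le> C"
  shows "L2fun f"
proof -
  have "set_integrable lborel {a..b} (\<lambda>x. (f x)\<^sup>2)"
    using power_mono[OF bound abs_ge_zero, of _ 2] by (intro set_integrable_bounded[where C="C\<^sup>2"]) auto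
  moreover have "(\<lambda>x. indicat_real {a..b} x *\<^sub>R (f x)\<^sup>2) = (\<lambda>x. (f x)\<^sup>2)"
    using supp by (auto simp: indicator_def fun_eq_iff)
  ultimately show ?thesis by (simp add: L2fun_def set_integrable_def)
qed

lemma integral_eq_interval_integral_support:
  fixes f :: "real \<Rightarrow> real"
  assumes "\<And>x. x \<notin> {a..b} \<Longrightarrow> f x = 0" and "a \<le> b"
  shows "(LINT x|lborel. f x) = (LBINT x=ereal a..ereal b. f x)"
proof -
  have "(LBINT x=ereal a..ereal b. f x) = (LBINT x:{a..b}. f x)"
    by (rule interval_integral_Icc) fact
  also have "\<dots> = (LINT x|lborel. f x)"
    unfolding set_lebesgue_integral_def
    by (rule Bochner_Integration.integral_cong) (use assms in \<open>auto simp: indicator_def\<close>)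
  finally show ?thesis by simp
qed

lemma interval_integral_eq_if_zero_below:
  fixes f :: "real \<Rightarrow> real"
  assumes "interval_lebesgue_integrable lborel (ereal A) (ereal B) f"
    and "A \<le> c" "c \<le> B" and "\<And>x. x < c \<Longrightarrow> f x = 0"
  shows "(LBINT x=ereal A..ereal B. f x) = (LBINT x=ereal c..ereal B. f x)"
proof -
  have "(LBINT x=ereal A..ereal c. f x) + (LBINT x=ereal c..ereal B. f x) = (LBINT x=ereal A..ereal B. f x)"
    by (rule interval_integral_sum) (use assms in \<open>auto simp: min_def max_def\<close>)
  moreover have "(LBINT x=ereal A..ereal c. f x) = (LBINT x=ereal A..ereal c. 0)"
    by (rule interval_integral_cong) (use assms in \<open>auto simp: einterval_iff min_def max_def\<close>)
  ultimately show ?thesis by simp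
qed

lemma interval_integrable_continuous:
  fixes f :: "real \<Rightarrow> real"
  shows "continuous_on UNIV f \<Longrightarrow> interval_lebesgue_integrable lborel (ereal A) (ereal B) f"
  by (rule interval_integrable_isCont) (auto simp: continuous_on_eq_continuous_at)

lemma integral_eq_integral_support:
  fixes f :: "real \<Rightarrow> real"
  assumes "continuous_on UNIV f" and "\<And>x. x \<notin> {A..B} \<Longrightarrow> f x = 0" and "A \<le> B"
  shows "(LINT x|lborel. f x) = integral {A..B} f"
proof -
  have "(LINT x|lborel. f x) = (LBINT x=ereal A..ereal B. f x)"
    by (rule integral_eq_interval_integral_support[OF assms(2,3)])
  also have "\<dots> = integral {A..B} f"
    by (rule interval_integral_eq_integral[OF assms(3)] borel_integrable_atLeastAtMost')+
       (use assms(1) in \<open>auto intro: continuous_on_subset\<close>)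
  finally show ?thesis .
qed

section \<open>Second weak derivatives\<close>

lemma LBINT_eq_diff_if_indefinite:
  fixes g w :: "real \<Rightarrow> real"
  assumes "L2fun w" and "\<forall>x. g x = g 0 + (LBINT t=0..x. w t)"
  shows "(LBINT t=ereal a..ereal b. w t) = g b - g a"
proof -
  have "(LBINT t=ereal 0..ereal a. w t) + (LBINT t=ereal a..ereal b. w t) = (LBINT t=ereal 0..ereal b. w t)"
    by (rule interval_integral_sum) (use interval_integrable_L2fun[OF assms(1)] in \<open>auto simp: min_def max_def\<close>)
  with assms(2)[rule_format, of a] assms(2)[rule_format, of b] show ?thesis
    by (simp add: zero_ereal_def)
qed

lemma continuous_on_if_indefinite:
  fixes g w :: "real \<Rightarrow> real"
  assumes w: "L2fun w" and g: "\<forall>x. g x = g 0 + (LBINT t=0..x. w t)"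
  shows "continuous_on UNIV g"
proof -
  have "isCont g x0" for x0
  proof -
    define a where "a = - \<bar>x0\<bar> - 1"
    define b where "b = \<bar>x0\<bar> + 1"
    have w_on: "w integrable_on {a..x}" for x
      using set_borel_integral_eq_integral(1)[OF set_integrable_L2fun[OF w]] .
    have eq: "g x = g a + integral {a..x} w" if "x \<in> {a..b}" for x
      using LBINT_eq_diff_if_indefinite[OF w g, of a x] that
        interval_integral_eq_integral[OF _ set_integrable_L2fun[OF w], of a x]
      by simp
    have "continuous_on {a..b} (\<lambda>x. g a + integral {a..x} w)"
      by (rule continuous_on_add[OF continuous_on_const indefinite_integral_continuous_1[OF w_on]])
    then have "continuous_on {a..b} g"
      by (rule continuous_on_eq) (rule eq[symmetric])
    moreover have "x0 \<in> interior {a..b}" unfolding a_def b_def by auto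
    ultimately show ?thesis by (rule continuous_on_interior)
  qed
  then show ?thesis by (simp add: continuous_at_imp_continuous_on)
qed

lemma abs_diff_le_integral_abs_deriv:
  fixes f f' :: "real \<Rightarrow> real"
  assumes deriv: "\<And>t. (f has_real_derivative f' t) (at t)" and f': "integrable lborel f'" and "a \<le> b"
  shows "\<bar>f b - f a\<bar> \<le> (LINT t|lborel. \<bar>f' t\<bar>)"
proof -
  have "(f' has_integral (f b - f a)) {a..b}"
    using deriv by (intro fundamental_theorem_of_calculus[OF \<open>a \<le> b\<close>])
      (auto simp: has_real_derivative_iff_has_vector_derivative[symmetric] intro: has_field_derivative_at_within)
  moreover have on_ab: "set_integrable lborel {a..b} f'"
    using f' unfolding set_integrable_def by (rule integrable_mult_indicator[rotated]) simp
  ultimately have "(LINT t:{a..b}|lborel. f' t) = f b - f a"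
    using set_borel_integral_eq_integral(2)[OF on_ab] by (simp add: integral_unique)
  moreover have "norm (LINT t:{a..b}|lborel. f' t) \<le> (LINT t:{a..b}|lborel. norm (f' t))"
    by (rule set_integral_norm_bound[OF on_ab])
  moreover have "(LINT t:{a..b}|lborel. norm (f' t)) \<le> (LINT t|lborel. \<bar>f' t\<bar>)"
    unfolding set_lebesgue_integral_def real_norm_def
    using f' by (intro integral_mono integrable_mult_indicator) (auto simp: indicator_def)
  ultimately show ?thesis by simp
qed

text \<open>The one-dimensional Sobolev embedding \<open>H\<^sup>1 \<subseteq> L\<^sup>\<infinity>\<close>: \<open>u\<^sup>2\<close> has the integrable
  derivative \<open>2 u u'\<close>, so it oscillates by at most \<open>\<parallel>2 u u'\<parallel>\<^sub>1\<close>, and it is \<open>< 1\<close> somewhere.\<close>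
lemma bounded_if_L2fun_deriv:
  fixes u u' :: "real \<Rightarrow> real"
  assumes u: "L2fun u" and u': "L2fun u'" and deriv: "\<And>x. (u has_real_derivative u' x) (at x)"
  shows "\<exists>R. \<forall>x. \<bar>u x\<bar> \<le> R"
proof -
  define S where "S = (LINT t|lborel. \<bar>2 * (u t * u' t)\<bar>)"
  have "((\<lambda>t. (u t)\<^sup>2) has_real_derivative 2 * (u t * u' t)) (at t)" for t
    using DERIV_power[OF deriv[of t], of 2] by (simp add: algebra_simps)
  then have oscillation: "\<bar>(u b)\<^sup>2 - (u a)\<^sup>2\<bar> \<le> S" if "a \<le> b" for a b
    unfolding S_def using integrable_mult_L2fun[OF u u'] that
    by (intro abs_diff_le_integral_abs_deriv) auto
  have "\<exists>y. (u y)\<^sup>2 < 1"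
  proof (rule ccontr)
    assume "\<not> ?thesis"
    then have ge: "1 \<le> (u x)\<^sup>2" for x by (simp add: not_less)
    have "integrable lborel (\<lambda>_::real. 1::real)"
      by (rule Bochner_Integration.integrable_bound[where f="\<lambda>x. (u x)\<^sup>2"])
         (use u ge in \<open>auto simp: L2fun_def\<close>)
    then show False by (simp add: integrable_iff_bounded)
  qed
  then obtain y where y: "(u y)\<^sup>2 < 1" by blast
  have "\<bar>u x\<bar> \<le> 1 + S" for x
  proof -
    have "(u x)\<^sup>2 \<le> 1 + S"
      using oscillation[of x y] oscillation[of y x] y by (cases "x \<le> y") auto
    moreover have "S \<ge> 0" unfolding S_def by simp
    moreover have "\<bar>u x\<bar> \<le> max 1 ((u x)\<^sup>2)"
    proof (cases "\<bar>u x\<bar> \<le> 1")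
      case False
      then have "\<bar>u x\<bar> * 1 \<le> \<bar>u x\<bar> * \<bar>u x\<bar>" by (intro mult_left_mono) auto
      then show ?thesis by (simp add: power2_eq_square)
    qed simp
    ultimately show ?thesis by (auto simp: max_def split: if_splits)
  qed
  then show ?thesis by blast
qed

text \<open>The positive and negative parts of \<open>g\<close> are densities of finite measures that agree on all
  half-lines, hence coincide.\<close>
lemma AE_zero_if_half_line_integrals_zero:
  fixes g :: "real \<Rightarrow> real"
  assumes g: "integrable lborel g" and zero: "\<And>a. (LINT x|lborel. g x * indicator {a<..} x) = 0"
  shows "AE x in lborel. g x = 0"
proof -
  have [measurable]: "g \<in> borel_measurable borel" using g by simp
  have pos: "integrable lborel (\<lambda>x. max 0 (g x) * indicator {a<..} x)" for a
    by (rule Bochner_Integration.integrable_bound[OF integrable_abs[OF g]]) (auto simp: indicator_def)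
  have neg: "integrable lborel (\<lambda>x. max 0 (- g x) * indicator {a<..} x)" for a
    by (rule Bochner_Integration.integrable_bound[OF integrable_abs[OF g]]) (auto simp: indicator_def)
  let ?M = "density lborel (\<lambda>x. ennreal (max 0 (g x)))"
  let ?N = "density lborel (\<lambda>x. ennreal (max 0 (- g x)))"
  have M: "emeasure ?M {a<..} = ennreal (LINT x|lborel. max 0 (g x) * indicator {a<..} x)"
   and N: "emeasure ?N {a<..} = ennreal (LINT x|lborel. max 0 (- g x) * indicator {a<..} x)" for a
    by (auto simp: emeasure_density nn_integral_eq_integral[symmetric] pos neg
        intro!: nn_integral_cong simp flip: ennreal_mult' split: split_indicator)
  have "?M = ?N"
  proof (rule measure_eqI_lessThan)
    fix a
    have "(LINT y|lborel. max 0 (g y) * indicator {a<..} y) - (LINT y|lborel. max 0 (- g y) * indicator {a<..} y)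
        = (LINT y|lborel. g y * indicator {a<..} y)"
      unfolding Bochner_Integration.integral_diff[OF pos neg, symmetric]
      by (intro Bochner_Integration.integral_cong) (auto simp: max_def)
    then show "emeasure ?M {a<..} = emeasure ?N {a<..}"
      using M N zero[of a] by simp
  qed (use M in auto)
  then have "AE x in lborel. ennreal (max 0 (g x)) = ennreal (max 0 (- g x))"
    by (subst (asm) sigma_finite_measure.density_unique_iff[OF sigma_finite_lborel]) auto
  then show ?thesis
    by (rule eventually_mono) (auto simp: max_def split: if_splits)
qed

lemma AE_zero_if_interval_integrals_zero:
  fixes g :: "real \<Rightarrow> real"
  assumes [measurable]: "g \<in> borel_measurable borel"
    and loc: "\<And>a b. set_integrable lborel {a..b} g"
    and zero: "\<And>a b. (LBINT t=ereal a..ereal b. g t) = 0"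
  shows "AE x in lborel. g x = 0"
proof -
  have Icc: "(LBINT t:{a..b}. g t) = 0" and Ioc: "(LBINT t:{a<..b}. g t) = 0" if "a \<le> b" for a b
    using zero[of a b] interval_integral_Icc[OF that, of g] interval_integral_Ioc[OF that, of g] by simp_all
  have on_compact: "AE x in lborel. indicator {-real n..real n} x * g x = 0" for n :: nat
  proof (rule AE_zero_if_half_line_integrals_zero)
    show "integrable lborel (\<lambda>x. indicator {-real n..real n} x * g x)"
      using loc[of "-real n" "real n"] unfolding set_integrable_def by simp
    fix a
    show "(LINT x|lborel. indicator {-real n..real n} x * g x * indicator {a<..} x) = 0"
    proof (cases "a < - real n")
      case True
      then have "(LINT x|lborel. indicator {-real n..real n} x * g x * indicator {a<..} x)
          = (LBINT t:{-real n..real n}. g t)"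
        unfolding set_lebesgue_integral_def
        by (intro Bochner_Integration.integral_cong) (auto simp: indicator_def)
      then show ?thesis using Icc by simp
    next
      case False
      then have "(LINT x|lborel. indicator {-real n..real n} x * g x * indicator {a<..} x)
          = (LBINT t:{a<..real n}. g t)"
        unfolding set_lebesgue_integral_def
        by (intro Bochner_Integration.integral_cong) (auto simp: indicator_def)
      then show ?thesis
        using Ioc[of a "real n"] by (cases "a \<le> real n") (auto simp: set_lebesgue_integral_def)
    qed
  qed
  have "AE x in lborel. \<forall>n::nat. indicator {-real n..real n} x * g x = 0"
    unfolding AE_all_countable using on_compact by blast
  then show ?thesis
  proof (rule eventually_mono)
    fix x assume x: "\<forall>n::nat. indicator {-real n..real n} x * g x = 0"
    obtain n :: nat where "\<bar>x\<bar> \<le> real n" using real_arch_simple by blast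
    then show "g x = 0" using x[rule_format, of n] by (auto simp: indicator_def)
  qed
qed

lemma is_d2_AE_unique:
  assumes "is_d2 u w1" "is_d2 u w2" "L2fun w1" "L2fun w2"
  shows "AE x in lborel. w1 x = w2 x"
proof -
  obtain u1 where u1: "\<forall>x. (u has_real_derivative u1 x) (at x)" "\<forall>x. u1 x = u1 0 + (LBINT t=0..x. w1 t)"
    using assms(1) unfolding is_d2_def by blast
  obtain u2 where u2: "\<forall>x. (u has_real_derivative u2 x) (at x)" "\<forall>x. u2 x = u2 0 + (LBINT t=0..x. w2 t)"
    using assms(2) unfolding is_d2_def by blast
  have "u1 x = u2 x" for x using u1(1) u2(1) DERIV_unique by blast
  have w: "L2fun (\<lambda>x. w1 x - w2 x)" by (rule L2fun_diff[OF assms(3,4)])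
  have "AE x in lborel. w1 x - w2 x = 0"
  proof (rule AE_zero_if_interval_integrals_zero)
    show "(\<lambda>x. w1 x - w2 x) \<in> borel_measurable borel" using w unfolding L2fun_def by simp
    show "set_integrable lborel {a..b} (\<lambda>x. w1 x - w2 x)" for a b by (rule set_integrable_L2fun[OF w])
    fix a b
    show "(LBINT t=ereal a..ereal b. w1 t - w2 t) = 0"
      using interval_lebesgue_integral_diff[OF interval_integrable_L2fun[OF assms(3)] interval_integrable_L2fun[OF assms(4)]]
        LBINT_eq_diff_if_indefinite[OF assms(3) u1(2)] LBINT_eq_diff_if_indefinite[OF assms(4) u2(2)]
        \<open>\<And>x. u1 x = u2 x\<close>
      by (simp only:)
  qed
  then show ?thesis by (rule eventually_mono) simp
qed

lemma is_d2_add_scaled: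
  assumes "is_d2 u w" "is_d2 h k" "L2fun w" "L2fun k"
  shows "is_d2 (\<lambda>x. u x + s * h x) (\<lambda>x. w x + s * k x)"
proof -
  obtain u1 where u1: "\<forall>x. (u has_real_derivative u1 x) (at x)" "L2fun u1" "\<forall>x. u1 x = u1 0 + (LBINT t=0..x. w t)"
    using assms(1) unfolding is_d2_def by blast
  obtain h1 where h1: "\<forall>x. (h has_real_derivative h1 x) (at x)" "L2fun h1" "\<forall>x. h1 x = h1 0 + (LBINT t=0..x. k t)"
    using assms(2) unfolding is_d2_def by blast
  show ?thesis unfolding is_d2_def
  proof (intro exI[of _ "\<lambda>x. u1 x + s * h1 x"] conjI allI)
    show "((\<lambda>x. u x + s * h x) has_real_derivative u1 x + s * h1 x) (at x)" for x
      using u1(1) h1(1) by (auto intro!: derivative_eq_intros)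
    show "L2fun (\<lambda>x. u1 x + s * h1 x)" by (intro L2fun_add L2fun_cmult u1(2) h1(2))
    fix x
    have "(LBINT t=0..ereal x. w t + s * k t) = (LBINT t=0..ereal x. w t) + s * (LBINT t=0..ereal x. k t)"
      using interval_integrable_L2fun[OF assms(3), of 0 x] interval_integrable_L2fun[OF assms(4), of 0 x]
      by (simp add: zero_ereal_def)
    then show "u1 x + s * h1 x = u1 0 + s * h1 0 + (LBINT t=0..ereal x. w t + s * k t)"
      using u1(3)[rule_format, of x] h1(3)[rule_format, of x] by (simp add: algebra_simps)
  qed
qed

lemma uxx_H2:
  assumes "u \<in> H2"
  shows "L2fun (uxx u)" and "is_d2 u (uxx u)"
proof -
  have "L2fun (uxx u) \<and> is_d2 u (uxx u)"
    unfolding uxx_def by (rule someI_ex[of "\<lambda>w. L2fun w \<and> is_d2 u w"]) (use assms in \<open>simp add: H2_def\<close>)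
  then show "L2fun (uxx u)" and "is_d2 u (uxx u)" by auto
qed

lemma H2_add_scaled:
  assumes u: "u \<in> H2" and h: "L2fun h" "is_d2 h k" "L2fun k"
  shows "(\<lambda>x. u x + s * h x) \<in> H2"
    and "AE x in lborel. uxx (\<lambda>x. u x + s * h x) x = uxx u x + s * k x"
proof -
  have d2: "is_d2 (\<lambda>x. u x + s * h x) (\<lambda>x. uxx u x + s * k x)"
    using is_d2_add_scaled[of u "uxx u" h k s] uxx_H2[OF u] h by blast
  have L2: "L2fun (\<lambda>x. uxx u x + s * k x)"
    using uxx_H2[OF u] h by (intro L2fun_add L2fun_cmult) auto
  show H2: "(\<lambda>x. u x + s * h x) \<in> H2"
    using u h d2 L2 by (auto simp: H2_def intro!: L2fun_add L2fun_cmult)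
  show "AE x in lborel. uxx (\<lambda>x. u x + s * h x) x = uxx u x + s * k x"
    by (rule is_d2_AE_unique[OF uxx_H2(2)[OF H2] d2 uxx_H2(1)[OF H2] L2])
qed

section \<open>Quadratic B-splines as test functions\<close>

definition heaviside :: "real \<Rightarrow> real" where "heaviside t = (if t \<le> 0 then 0 else 1)"
definition ramp :: "real \<Rightarrow> real" where "ramp t = (if t \<le> 0 then 0 else t)"
definition half_ramp_sq :: "real \<Rightarrow> real" where "half_ramp_sq t = (if t \<le> 0 then 0 else t\<^sup>2 / 2)"

lemma has_real_derivative_half_ramp_sq: "(half_ramp_sq has_real_derivative ramp t) (at t)"
proof -
  have "((\<lambda>t. t\<^sup>2 / 2) has_vector_derivative t) (at t within S)" for t :: real and S
    unfolding has_real_derivative_iff_has_vector_derivative[symmetric]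
    by (auto intro!: derivative_eq_intros)
  then have "((\<lambda>t. if t \<in> {..0} then 0 else t\<^sup>2 / 2) has_vector_derivative
      (if t \<in> {..0} then 0 else t)) (at t within UNIV)"
    by (intro has_vector_derivative_If_within_closures[where T="{0<..}"]) auto
  then show ?thesis
    by (simp add: has_real_derivative_iff_has_vector_derivative half_ramp_sq_def[abs_def] ramp_def atMost_def)
qed

lemma continuous_on_ramp: "continuous_on UNIV ramp"
proof -
  have "continuous_on UNIV (\<lambda>t::real. max 0 t)" by (intro continuous_intros)
  moreover have "ramp = (\<lambda>t. max 0 t)" by (auto simp: ramp_def fun_eq_iff)
  ultimately show ?thesis by simp
qed

lemma continuous_on_half_ramp_sq: "continuous_on UNIV half_ramp_sq"
  using has_real_derivative_half_ramp_sq
  by (meson DERIV_isCont continuous_at_imp_continuous_on)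

lemma heaviside_measurable [measurable]: "heaviside \<in> borel_measurable borel"
  unfolding heaviside_def by measurable

lemma ramp_measurable [measurable]: "ramp \<in> borel_measurable borel"
  by (rule borel_measurable_continuous_onI[OF continuous_on_ramp])

lemma half_ramp_sq_measurable [measurable]: "half_ramp_sq \<in> borel_measurable borel"
  by (rule borel_measurable_continuous_onI[OF continuous_on_half_ramp_sq])

lemma LBINT_heaviside: "(LBINT t=ereal y..ereal x. heaviside (t - c)) = ramp (x - c) - ramp (y - c)"
proof -
  have integrable: "interval_lebesgue_integrable lborel (ereal a) (ereal b) (\<lambda>t. heaviside (t - c))" for a b
    by (rule interval_integrable_bounded[where C=1]) (auto simp: heaviside_def)
  have from_c: "(LBINT t=ereal c..ereal x. heaviside (t - c)) = ramp (x - c)" for x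
  proof -
    have "(LBINT t=ereal c..ereal x. heaviside (t - c)) = (LBINT t=ereal c..ereal x. (if c \<le> x then 1 else 0))"
      by (rule interval_integral_cong) (auto simp: einterval_iff heaviside_def min_def max_def split: if_splits)
    then show ?thesis by (auto simp: ramp_def)
  qed
  have "(LBINT t=ereal y..ereal c. heaviside (t - c)) + (LBINT t=ereal c..ereal x. heaviside (t - c))
      = (LBINT t=ereal y..ereal x. heaviside (t - c))"
    by (rule interval_integral_sum) (use integrable in \<open>auto simp: min_def max_def\<close>)
  with from_c[of x] from_c[of y]
    interval_integral_endpoints_reverse[of "ereal y" "ereal c" "\<lambda>t. heaviside (t - c)"]
  show ?thesis by simp
qed

definition diff3 :: "(real \<Rightarrow> real) \<Rightarrow> real \<Rightarrow> real \<Rightarrow> real" where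
  "diff3 F a e = F a - 3 * F (a + e) + 3 * F (a + 2 * e) - F (a + 3 * e)"

lemma diff3_quadratic: "diff3 (\<lambda>x. \<alpha> + \<beta> * x + \<gamma> * x\<^sup>2) a e = 0"
  by (simp add: diff3_def power2_eq_square algebra_simps)

lemma diff3_add_quadratic: "diff3 (\<lambda>x. \<alpha> + \<beta> * x + \<gamma> * x\<^sup>2 + F x) a e = diff3 F a e"
  using diff3_quadratic[of \<alpha> \<beta> \<gamma> a e] by (simp add: diff3_def)

lemma diff3_cong:
  "e \<ge> 0 \<Longrightarrow> (\<And>c. c \<in> {a..a + 3 * e} \<Longrightarrow> F c = G c) \<Longrightarrow> diff3 F a e = diff3 G a e"
  by (simp add: diff3_def)

text \<open>For the kernel \<open>half_ramp_sq\<close>, \<open>bspline k a e\<close> is the quadratic B-spline with knots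
  \<open>a, a + e, a + 2e, a + 3e\<close> (scaled by \<open>e\<^sup>2\<close>); its first and second derivatives are the splines
  of the kernels \<open>ramp\<close> and \<open>heaviside\<close>.\<close>
definition bspline :: "(real \<Rightarrow> real) \<Rightarrow> real \<Rightarrow> real \<Rightarrow> real \<Rightarrow> real" where
  "bspline k a e x = diff3 (\<lambda>c. k (x - c)) a e"

definition spline_kernel :: "(real \<Rightarrow> real) \<Rightarrow> bool" where
  "spline_kernel k \<longleftrightarrow> k \<in> borel_measurable borel \<and> (\<forall>t\<le>0. k t = 0) \<and>
     (\<exists>\<alpha> \<beta> \<gamma>. \<forall>t>0. k t = \<alpha> + \<beta> * t + \<gamma> * t\<^sup>2)"

lemma spline_kernelI:
  "k \<in> borel_measurable borel \<Longrightarrow> (\<And>t. t \<le> 0 \<Longrightarrow> k t = 0) \<Longrightarrow>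
    (\<And>t. t > 0 \<Longrightarrow> k t = \<alpha> + \<beta> * t + \<gamma> * t\<^sup>2) \<Longrightarrow> spline_kernel k"
  unfolding spline_kernel_def by blast

lemma spline_kernel_heaviside: "spline_kernel heaviside"
  by (rule spline_kernelI[where \<alpha>=1 and \<beta>=0 and \<gamma>=0]) (auto simp: heaviside_def)

lemma spline_kernel_ramp: "spline_kernel ramp"
  by (rule spline_kernelI[where \<alpha>=0 and \<beta>=1 and \<gamma>=0]) (auto simp: ramp_def)

lemma spline_kernel_half_ramp_sq: "spline_kernel half_ramp_sq"
  by (rule spline_kernelI[where \<alpha>=0 and \<beta>=0 and \<gamma>="1/2"]) (auto simp: half_ramp_sq_def)

lemma bspline_measurable [measurable]:
  assumes "spline_kernel k"
  shows "bspline k a e \<in> borel_measurable borel"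
proof -
  have [measurable]: "k \<in> borel_measurable borel" using assms by (simp add: spline_kernel_def)
  show ?thesis unfolding bspline_def[abs_def] diff3_def by measurable
qed

lemma bspline_eq_0:
  assumes k: "spline_kernel k" and "e > 0" and x: "x \<notin> {a..a + 3 * e}"
  shows "bspline k a e x = 0"
proof -
  obtain \<alpha> \<beta> \<gamma> where neg: "\<And>t. t \<le> 0 \<Longrightarrow> k t = 0" and pos: "\<And>t. t > 0 \<Longrightarrow> k t = \<alpha> + \<beta> * t + \<gamma> * t\<^sup>2"
    using k unfolding spline_kernel_def by blast
  consider "x < a" | "x > a + 3 * e" using x by auto
  then show ?thesis
  proof cases
    case 1
    with \<open>e > 0\<close> show ?thesis by (simp add: bspline_def diff3_def neg)
  next
    case 2
    have "bspline k a e x = diff3 (\<lambda>c. \<alpha> + \<beta> * (x - c) + \<gamma> * (x - c)\<^sup>2) a e"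
      unfolding bspline_def using \<open>e > 0\<close> 2 by (intro diff3_cong) (auto intro!: pos)
    also have "\<dots> = diff3 (\<lambda>c. (\<alpha> + \<beta> * x + \<gamma> * x\<^sup>2) + (- \<beta> - 2 * \<gamma> * x) * c + \<gamma> * c\<^sup>2) a e"
      by (simp add: power2_eq_square algebra_simps)
    finally show ?thesis by (simp only: diff3_quadratic)
  qed
qed

lemma bspline_bounded:
  assumes k: "spline_kernel k" and "e > 0"
  shows "\<exists>C. \<forall>x. \<bar>bspline k a e x\<bar> \<le> C"
proof -
  obtain \<alpha> \<beta> \<gamma> where neg: "\<And>t. t \<le> 0 \<Longrightarrow> k t = 0" and pos: "\<And>t. t > 0 \<Longrightarrow> k t = \<alpha> + \<beta> * t + \<gamma> * t\<^sup>2"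
    using k unfolding spline_kernel_def by blast
  define B where "B = \<bar>\<alpha>\<bar> + \<bar>\<beta>\<bar> * (3 * e) + \<bar>\<gamma>\<bar> * (3 * e)\<^sup>2"
  have kB: "\<bar>k t\<bar> \<le> B" if "t \<le> 3 * e" for t
  proof (cases "t \<le> 0")
    case False
    then have "t\<^sup>2 \<le> (3 * e)\<^sup>2" using that by (intro power_mono) auto
    then have "\<bar>\<beta> * t\<bar> \<le> \<bar>\<beta>\<bar> * (3 * e)" "\<bar>\<gamma> * t\<^sup>2\<bar> \<le> \<bar>\<gamma>\<bar> * (3 * e)\<^sup>2"
      using that False by (auto simp: abs_mult intro!: mult_left_mono)
    then show ?thesis using False by (simp add: pos B_def)
  qed (use \<open>e > 0\<close> in \<open>simp add: neg B_def\<close>)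
  have "\<bar>bspline k a e x\<bar> \<le> 8 * B" for x
  proof (cases "x \<in> {a..a + 3 * e}")
    case True
    then have "\<bar>k (x - a)\<bar> \<le> B" "\<bar>k (x - (a + e))\<bar> \<le> B"
      "\<bar>k (x - (a + 2 * e))\<bar> \<le> B" "\<bar>k (x - (a + 3 * e))\<bar> \<le> B"
      using \<open>e > 0\<close> by (auto intro!: kB)
    then show ?thesis by (auto simp: bspline_def diff3_def abs_le_iff)
  next
    case False
    then show ?thesis using bspline_eq_0[OF k \<open>e > 0\<close>] kB[of 0] \<open>e > 0\<close> by simp
  qed
  then show ?thesis by blast
qed

lemma L2fun_bspline:
  assumes "spline_kernel k" and "e > 0"
  shows "L2fun (bspline k a e)"
proof -
  obtain C where "\<forall>x. \<bar>bspline k a e x\<bar> \<le> C" using bspline_bounded[OF assms] by blast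
  then show ?thesis
    by (intro L2fun_bounded_support[where a=a and b="a + 3 * e" and C=C] bspline_eq_0 assms)
       (use assms in auto)
qed

lemma has_real_derivative_bspline:
  assumes "\<And>t. (k has_real_derivative k' t) (at t)"
  shows "(bspline k a e has_real_derivative bspline k' a e x) (at x)"
proof -
  have shift: "((\<lambda>x. k (x - c)) has_real_derivative k' (x - c)) (at x)" for c
    using DERIV_shift[of k "k' (x - c)" x "- c"] assms by simp
  show ?thesis
    unfolding bspline_def[abs_def] diff3_def by (intro DERIV_diff DERIV_add DERIV_cmult shift)
qed

lemma continuous_on_bspline:
  assumes "continuous_on UNIV k"
  shows "continuous_on UNIV (bspline k a e)"
proof -
  have "continuous_on UNIV (\<lambda>x. k (x - c))" for c
    by (rule continuous_on_compose2[OF assms]) (auto intro: continuous_intros)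
  then show ?thesis unfolding bspline_def[abs_def] diff3_def by (intro continuous_intros)
qed

lemma is_d2_bspline:
  assumes "e > 0"
  shows "is_d2 (bspline half_ramp_sq a e) (bspline heaviside a e)"
  unfolding is_d2_def
proof (intro exI[of _ "bspline ramp a e"] conjI allI)
  show "(bspline half_ramp_sq a e has_real_derivative bspline ramp a e x) (at x)" for x
    by (intro has_real_derivative_bspline has_real_derivative_half_ramp_sq)
  show "L2fun (bspline ramp a e)" by (rule L2fun_bspline[OF spline_kernel_ramp assms])
  fix x
  have "interval_lebesgue_integrable lborel (ereal 0) (ereal x) (\<lambda>t. heaviside (t - c))" for c
    by (rule interval_integrable_bounded[where C=1]) (auto simp: heaviside_def)
  then have "(LBINT t=ereal 0..ereal x. bspline heaviside a e t)
      = diff3 (\<lambda>c. LBINT t=ereal 0..ereal x. heaviside (t - c)) a e"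
    unfolding bspline_def diff3_def by simp
  then show "bspline ramp a e x = bspline ramp a e 0 + (LBINT t=0..x. bspline heaviside a e t)"
    unfolding LBINT_heaviside zero_ereal_def by (simp add: bspline_def diff3_def)
qed

lemma LBINT_mult_half_ramp_sq:
  fixes \<phi> F1 F2 F3 :: "real \<Rightarrow> real"
  assumes \<phi>: "continuous_on UNIV \<phi>" and F1: "\<And>x. (F1 has_real_derivative \<phi> x) (at x)"
    and F2: "\<And>x. (F2 has_real_derivative F1 x) (at x)" and F3: "\<And>x. (F3 has_real_derivative F2 x) (at x)"
    and "A \<le> c" "c \<le> B"
  shows "(LBINT x=ereal A..ereal B. \<phi> x * half_ramp_sq (x - c))
    = F1 B * ((B - c)\<^sup>2 / 2) - F2 B * (B - c) + F3 B - F3 c"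
proof -
  let ?P = "\<lambda>x. F1 x * ((x - c)\<^sup>2 / 2) - F2 x * (x - c) + F3 x"
  have cont: "continuous_on UNIV (\<lambda>x. \<phi> x * half_ramp_sq (x - c))"
    by (intro continuous_intros \<phi> continuous_on_compose2[OF continuous_on_half_ramp_sq]) auto
  have "(LBINT x=ereal A..ereal B. \<phi> x * half_ramp_sq (x - c)) = (LBINT x=ereal c..ereal B. \<phi> x * half_ramp_sq (x - c))"
    by (rule interval_integral_eq_if_zero_below[OF interval_integrable_continuous[OF cont]])
       (use assms in \<open>auto simp: half_ramp_sq_def\<close>)
  also have "\<dots> = ?P B - ?P c"
  proof (rule interval_integral_FTC_finite)
    show "continuous_on {min c B..max c B} (\<lambda>x. \<phi> x * half_ramp_sq (x - c))"
      using cont by (rule continuous_on_subset) auto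
    fix x assume x: "min c B \<le> x" "x \<le> max c B"
    have dq: "((\<lambda>x. (x - c)\<^sup>2 / 2) has_real_derivative x - c) (at x)"
      and dl: "((\<lambda>x. x - c) has_real_derivative 1) (at x)"
      by (auto intro!: derivative_eq_intros)
    have "\<phi> x * ((x - c)\<^sup>2 / 2) + F1 x * (x - c) - (F1 x * (x - c) + F2 x * 1) + F2 x
        = \<phi> x * half_ramp_sq (x - c)"
      using x assms by (auto simp: half_ramp_sq_def)
    then have "(?P has_real_derivative \<phi> x * half_ramp_sq (x - c)) (at x)"
      by (intro DERIV_cong[OF DERIV_add[OF DERIV_diff[OF DERIV_mult[OF F1 dq] DERIV_mult[OF F2 dl]] F3]])
         (simp add: algebra_simps)
    then show "(?P has_vector_derivative \<phi> x * half_ramp_sq (x - c)) (at x within {min c B..max c B})"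
      by (simp add: has_real_derivative_iff_has_vector_derivative[symmetric] has_field_derivative_at_within)
  qed
  finally show ?thesis by simp
qed

lemma LBINT_mult_ramp:
  fixes \<phi> F1 F2 :: "real \<Rightarrow> real"
  assumes \<phi>: "continuous_on UNIV \<phi>" and F1: "\<And>x. (F1 has_real_derivative \<phi> x) (at x)"
    and F2: "\<And>x. (F2 has_real_derivative F1 x) (at x)"
    and "A \<le> c" "c \<le> B"
  shows "(LBINT x=ereal A..ereal B. \<phi> x * ramp (x - c)) = F1 B * (B - c) - F2 B + F2 c"
proof -
  let ?P = "\<lambda>x. F1 x * (x - c) - F2 x"
  have cont: "continuous_on UNIV (\<lambda>x. \<phi> x * ramp (x - c))"
    by (intro continuous_intros \<phi> continuous_on_compose2[OF continuous_on_ramp]) auto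
  have "(LBINT x=ereal A..ereal B. \<phi> x * ramp (x - c)) = (LBINT x=ereal c..ereal B. \<phi> x * ramp (x - c))"
    by (rule interval_integral_eq_if_zero_below[OF interval_integrable_continuous[OF cont]])
       (use assms in \<open>auto simp: ramp_def\<close>)
  also have "\<dots> = ?P B - ?P c"
  proof (rule interval_integral_FTC_finite)
    show "continuous_on {min c B..max c B} (\<lambda>x. \<phi> x * ramp (x - c))"
      using cont by (rule continuous_on_subset) auto
    fix x assume x: "min c B \<le> x" "x \<le> max c B"
    have "(?P has_real_derivative \<phi> x * (x - c)) (at x)"
      by (auto intro!: derivative_eq_intros F1 F2 simp: algebra_simps)
    moreover have "\<phi> x * (x - c) = \<phi> x * ramp (x - c)"
      using x assms by (auto simp: ramp_def)
    ultimately show "(?P has_vector_derivative \<phi> x * ramp (x - c)) (at x within {min c B..max c B})"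
      by (simp add: has_real_derivative_iff_has_vector_derivative[symmetric] has_field_derivative_at_within)
  qed
  finally show ?thesis by simp
qed

lemma LBINT_mult_heaviside:
  fixes w g :: "real \<Rightarrow> real"
  assumes w: "L2fun w" and g: "\<forall>x. g x = g 0 + (LBINT t=0..x. w t)" and "A \<le> c" "c \<le> B"
  shows "(LBINT x=ereal A..ereal B. w x * heaviside (x - c)) = g B - g c"
proof -
  have "(LBINT x=ereal A..ereal B. w x * heaviside (x - c)) = (LBINT x=ereal c..ereal B. w x * heaviside (x - c))"
    by (rule interval_integral_eq_if_zero_below)
       (use assms in \<open>auto simp: heaviside_def intro!: interval_integrable_L2fun L2fun_mult_bounded[where C=1]\<close>)
  also have "\<dots> = (LBINT x=ereal c..ereal B. w x)"
    by (rule interval_integral_cong) (use assms in \<open>auto simp: einterval_iff heaviside_def min_def max_def\<close>)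
  finally show ?thesis using LBINT_eq_diff_if_indefinite[OF w g] by simp
qed

lemma integral_mult_bspline:
  fixes \<phi> P :: "real \<Rightarrow> real"
  assumes k: "spline_kernel k" and e: "e > 0"
    and integrable: "\<And>c. interval_lebesgue_integrable lborel (ereal a) (ereal (a + 3 * e)) (\<lambda>x. \<phi> x * k (x - c))"
    and P: "\<And>c. c \<in> {a..a + 3 * e} \<Longrightarrow> (LBINT x=ereal a..ereal (a + 3 * e). \<phi> x * k (x - c)) = P c"
  shows "(LINT x|lborel. \<phi> x * bspline k a e x) = diff3 P a e"
proof -
  have "(LINT x|lborel. \<phi> x * bspline k a e x) = (LBINT x=ereal a..ereal (a + 3 * e). \<phi> x * bspline k a e x)"
    by (rule integral_eq_interval_integral_support) (use e bspline_eq_0[OF k e] in auto)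
  also have "\<dots> = diff3 (\<lambda>c. LBINT x=ereal a..ereal (a + 3 * e). \<phi> x * k (x - c)) a e"
    unfolding bspline_def diff3_def right_diff_distrib distrib_left mult.left_commute[of "\<phi> _" 3]
    using integrable by simp
  also have "\<dots> = diff3 P a e"
    using e by (intro diff3_cong P) auto
  finally show ?thesis .
qed

lemma integral_mult_bspline_half_ramp_sq:
  fixes \<phi> F1 F2 F3 :: "real \<Rightarrow> real"
  assumes \<phi>: "continuous_on UNIV \<phi>" and "\<And>x. (F1 has_real_derivative \<phi> x) (at x)"
    and "\<And>x. (F2 has_real_derivative F1 x) (at x)" and "\<And>x. (F3 has_real_derivative F2 x) (at x)"
    and e: "e > 0"
  shows "(LINT x|lborel. \<phi> x * bspline half_ramp_sq a e x) = - diff3 F3 a e"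
proof -
  let ?B = "a + 3 * e"
  have "(LINT x|lborel. \<phi> x * bspline half_ramp_sq a e x)
      = diff3 (\<lambda>c. F1 ?B * ((?B - c)\<^sup>2 / 2) - F2 ?B * (?B - c) + F3 ?B - F3 c) a e"
  proof (rule integral_mult_bspline[OF spline_kernel_half_ramp_sq e])
    show "interval_lebesgue_integrable lborel (ereal a) (ereal ?B) (\<lambda>x. \<phi> x * half_ramp_sq (x - c))" for c
      by (intro interval_integrable_continuous continuous_intros \<phi>
          continuous_on_compose2[OF continuous_on_half_ramp_sq]) auto
  qed (rule LBINT_mult_half_ramp_sq[OF assms(1-4)]; simp)
  also have "(\<lambda>c. F1 ?B * ((?B - c)\<^sup>2 / 2) - F2 ?B * (?B - c) + F3 ?B - F3 c)
      = (\<lambda>c. (F1 ?B * ?B\<^sup>2 / 2 - F2 ?B * ?B + F3 ?B) + (F2 ?B - F1 ?B * ?B) * c + (F1 ?B / 2) * c\<^sup>2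
          + (- F3 c))"
    by (rule ext) (simp add: power2_eq_square field_simps)
  finally show ?thesis by (simp only: diff3_add_quadratic) (simp add: diff3_def)
qed

lemma integral_mult_bspline_ramp:
  fixes \<phi> F1 F2 :: "real \<Rightarrow> real"
  assumes \<phi>: "continuous_on UNIV \<phi>" and "\<And>x. (F1 has_real_derivative \<phi> x) (at x)"
    and "\<And>x. (F2 has_real_derivative F1 x) (at x)" and e: "e > 0"
  shows "(LINT x|lborel. \<phi> x * bspline ramp a e x) = diff3 F2 a e"
proof -
  let ?B = "a + 3 * e"
  have "(LINT x|lborel. \<phi> x * bspline ramp a e x) = diff3 (\<lambda>c. F1 ?B * (?B - c) - F2 ?B + F2 c) a e"
  proof (rule integral_mult_bspline[OF spline_kernel_ramp e])
    show "interval_lebesgue_integrable lborel (ereal a) (ereal ?B) (\<lambda>x. \<phi> x * ramp (x - c))" for c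
      by (intro interval_integrable_continuous continuous_intros \<phi>
          continuous_on_compose2[OF continuous_on_ramp]) auto
  qed (rule LBINT_mult_ramp[OF assms(1-3)]; simp)
  also have "(\<lambda>c. F1 ?B * (?B - c) - F2 ?B + F2 c) = (\<lambda>c. (F1 ?B * ?B - F2 ?B) + (- F1 ?B) * c + 0 * c\<^sup>2 + F2 c)"
    by (simp add: fun_eq_iff algebra_simps)
  finally show ?thesis by (simp only: diff3_add_quadratic)
qed

lemma integral_mult_bspline_heaviside:
  fixes w g :: "real \<Rightarrow> real"
  assumes w: "L2fun w" and g: "\<forall>x. g x = g 0 + (LBINT t=0..x. w t)" and e: "e > 0"
  shows "(LINT x|lborel. w x * bspline heaviside a e x) = - diff3 g a e"
proof -
  let ?B = "a + 3 * e"
  have "(LINT x|lborel. w x * bspline heaviside a e x) = diff3 (\<lambda>c. g ?B - g c) a e"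
  proof (rule integral_mult_bspline[OF spline_kernel_heaviside e])
    show "interval_lebesgue_integrable lborel (ereal a) (ereal ?B) (\<lambda>x. w x * heaviside (x - c))" for c
      by (intro interval_integrable_L2fun L2fun_mult_bounded[OF w, where C=1]) (auto simp: heaviside_def)
  qed (rule LBINT_mult_heaviside[OF w g]; simp)
  then show ?thesis by (simp add: diff3_def)
qed

section \<open>Functions with vanishing third differences\<close>

lemma diff3_recurrence_eq_0:
  fixes t :: "nat \<Rightarrow> real"
  assumes rec: "\<And>k. t (k + 3) = 3 * t (k + 2) - 3 * t (k + 1) + t k"
    and "t 0 = 0" "t 1 = 0" "t 2 = 0"
  shows "t k = 0"
proof (induction k rule: less_induct)
  case (less k)
  show ?case
  proof (cases "k < 3")
    case True
    then have "k = 0 \<or> k = 1 \<or> k = 2" by auto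
    then show ?thesis using assms by auto
  next
    case False
    then obtain j where "k = j + 3" by (metis add.commute le_Suc_ex not_less)
    then show ?thesis using rec[of j] less.IH[of j] less.IH[of "j + 1"] less.IH[of "j + 2"] by simp
  qed
qed

lemma diff3_recurrence_closed_form:
  fixes s :: "nat \<Rightarrow> real"
  assumes rec: "\<And>k. s (k + 3) = 3 * s (k + 2) - 3 * s (k + 1) + s k"
  shows "s k = s 0 + real k * (s 1 - s 0) + real k * (real k - 1) / 2 * (s 2 - 2 * s 1 + s 0)"
proof -
  define q where "q k = s 0 + real k * (s 1 - s 0) + real k * (real k - 1) / 2 * (s 2 - 2 * s 1 + s 0)" for k
  have "s k - q k = 0"
  proof (rule diff3_recurrence_eq_0[where t="\<lambda>k. s k - q k"])
    show "s (k + 3) - q (k + 3) = 3 * (s (k + 2) - q (k + 2)) - 3 * (s (k + 1) - q (k + 1)) + (s k - q k)" for k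
      using rec[of k] unfolding q_def by (simp add: algebra_simps divide_simps)
  qed (simp_all add: q_def numeral_2_eq_2 field_simps)
  then show ?thesis unfolding q_def by simp
qed

lemma diff3_recurrence_eq_0_if_three_zeros:
  fixes s :: "nat \<Rightarrow> real"
  assumes rec: "\<And>k. s (k + 3) = 3 * s (k + 2) - 3 * s (k + 1) + s k"
    and zero: "s 0 = 0" "s m = 0" "s (2 * m) = 0" and "m > 0"
  shows "s k = 0"
proof -
  define A where "A = s 1 - s 0"
  define B where "B = s 2 - 2 * s 1 + s 0"
  have s: "s k = real k * A + real k * (real k - 1) / 2 * B" for k
    using diff3_recurrence_closed_form[OF rec, of k] zero unfolding A_def B_def by simp
  have at_m: "real m * A + real m * (real m - 1) / 2 * B = 0"
    and at_2m: "2 * real m * A + 2 * real m * (2 * real m - 1) / 2 * B = 0"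
    using s[of m] s[of "2 * m"] zero by simp_all
  have "2 * (real m * A) = real m * B - real m * real m * B"
    and "4 * (real m * A) + 4 * (real m * real m * B) = 2 * (real m * B)"
    using at_m at_2m by (simp_all add: field_simps)
  then have "real m * real m * B = 0" by linarith
  then have "B = 0" using \<open>m > 0\<close> by simp
  moreover have "A = 0" using at_m \<open>m > 0\<close> \<open>B = 0\<close> by simp
  ultimately show ?thesis using s[of k] by simp
qed

text \<open>Along every grid \<open>i / m\<close>, \<open>L\<close> satisfies the third-difference recurrence and vanishes at
  \<open>0, m, 2m\<close>, hence on the whole grid; running the recurrence downwards covers the negative grid
  points, so \<open>L\<close> vanishes on \<open>\<rat>\<close> and, being continuous, on \<open>\<real>\<close>.\<close>
lemma eq_0_if_diff3_eq_0:
  fixes L :: "real \<Rightarrow> real"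
  assumes cont: "continuous_on UNIV L" and diff3: "\<And>a e. e > 0 \<Longrightarrow> diff3 L a e = 0"
    and "L 0 = 0" "L 1 = 0" "L 2 = 0"
  shows "L x = 0"
proof -
  have grid: "L (real i / real m + 3 / real m) = 3 * L (real i / real m + 2 / real m)
      - 3 * L (real i / real m + 1 / real m) + L (real i / real m)" if "m > 0" for i m :: nat
    using diff3[of "1 / real m" "real i / real m"] that by (simp add: diff3_def)
  have nonneg_grid: "L (real k / real m) = 0" if "m > 0" for k m :: nat
  proof (rule diff3_recurrence_eq_0_if_three_zeros[where s="\<lambda>i. L (real i / real m)"])
    show "L (real (i + 3) / real m) = 3 * L (real (i + 2) / real m) - 3 * L (real (i + 1) / real m) + L (real i / real m)" for i
      using grid[OF that, of i] by (simp only: of_nat_add of_nat_numeral of_nat_1 add_divide_distrib)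
  qed (use that assms(3-5) in simp_all)
  have int_grid: "L ((real j - real k) / real m) = 0" if "m > 0" for j k m :: nat
  proof (induction k arbitrary: j)
    case 0
    show ?case using nonneg_grid[OF that] by simp
  next
    case (Suc k)
    have "L ((real j - real (Suc k)) / real m) = 3 * L ((real j - real k) / real m)
        - 3 * L ((real (j + 1) - real k) / real m) + L ((real (j + 2) - real k) / real m)"
      using diff3[of "1 / real m" "(real j - real (Suc k)) / real m"] that
      by (simp add: diff3_def field_simps)
    then show ?case using Suc.IH[of j] Suc.IH[of "j + 1"] Suc.IH[of "j + 2"] by simp
  qed
  have rat: "L q = 0" if q: "q \<in> \<rat>" for q
  proof -
    obtain p b :: int where "b > 0" and "q = of_int p / of_int b"
      using Rats_cases'[OF q] by metis
    moreover obtain j k :: nat where "p = int j - int k"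
      by (rule that[of "nat p" "nat (- p)"]) simp
    ultimately show ?thesis
      using int_grid[of "nat b" j k] by simp
  qed
  show ?thesis
  proof (rule continuous_constant_on_closure[where S="\<rat>" and f=L])
    show "continuous_on (closure \<rat>) L" using cont by (simp add: Rats_closure_real)
  qed (auto simp: Rats_closure_real rat)
qed

lemma quadratic_if_diff3_eq_0:
  fixes G :: "real \<Rightarrow> real"
  assumes cont: "continuous_on UNIV G" and diff3: "\<And>a e. e > 0 \<Longrightarrow> diff3 G a e = 0"
  shows "\<exists>\<alpha> \<beta> \<gamma>. \<forall>x. G x = \<alpha> + \<beta> * x + \<gamma> * x\<^sup>2"
proof -
  define \<gamma> where "\<gamma> = (G 2 - 2 * G 1 + G 0) / 2"
  define \<beta> where "\<beta> = G 1 - G 0 - \<gamma>"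
  define L where "L x = G x - (G 0 + \<beta> * x + \<gamma> * x\<^sup>2)" for x
  have "L x = 0" for x
  proof (rule eq_0_if_diff3_eq_0[where L=L])
    show "continuous_on UNIV L" unfolding L_def by (intro continuous_intros cont)
    show "diff3 L a e = 0" if "e > 0" for a e
      using diff3[OF that, of a] unfolding diff3_def L_def by (simp add: algebra_simps power2_eq_square)
  qed (simp_all add: L_def \<beta>_def \<gamma>_def power2_eq_square field_simps)
  then have "G x = G 0 + \<beta> * x + \<gamma> * x\<^sup>2" for x
    using L_def[of x] by (metis eq_iff_diff_eq_0)
  then show ?thesis by blast
qed

section \<open>Calculus lemmas for the potential and the functional\<close>

lemma abs_deriv_le_linear:
  fixes W :: "real \<Rightarrow> real"
  assumes cont: "continuous_on UNIV (deriv W)" and zero: "deriv W 0 = 0"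
    and second: "(deriv W has_real_derivative D) (at 0)"
  shows "\<exists>L\<ge>0. \<forall>s. \<bar>s\<bar> \<le> R \<longrightarrow> \<bar>deriv W s\<bar> \<le> L * \<bar>s\<bar>"
proof -
  have "((\<lambda>y. deriv W y / y) \<longlongrightarrow> D) (at 0)"
    using second zero unfolding has_field_derivative_iff by simp
  then have "\<forall>\<^sub>F y in at 0. \<bar>deriv W y / y\<bar> < \<bar>D\<bar> + 1"
    by (intro order_tendstoD(2)[OF tendsto_rabs]) auto
  then obtain d where "d > 0" and d: "\<And>y. y \<noteq> 0 \<Longrightarrow> \<bar>y\<bar> < d \<Longrightarrow> \<bar>deriv W y / y\<bar> < \<bar>D\<bar> + 1"
    unfolding eventually_at by (auto simp: dist_real_def)
  have near: "\<bar>deriv W y\<bar> \<le> (\<bar>D\<bar> + 1) * \<bar>y\<bar>" if "\<bar>y\<bar> < d" for y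
  proof (cases "y = 0")
    case False
    then have "\<bar>deriv W y\<bar> = \<bar>deriv W y / y\<bar> * \<bar>y\<bar>" by (simp add: abs_divide)
    also have "\<dots> \<le> (\<bar>D\<bar> + 1) * \<bar>y\<bar>" using d[OF False that] by (intro mult_right_mono) auto
    finally show ?thesis .
  qed (simp add: zero)
  have "compact (deriv W ` {-R..R})"
    by (rule compact_continuous_image) (auto intro: continuous_on_subset[OF cont])
  then obtain B where B: "\<And>s. s \<in> {-R..R} \<Longrightarrow> \<bar>deriv W s\<bar> \<le> B"
    using compact_imp_bounded bounded_iff by (metis image_eqI real_norm_def)
  define L where "L = max (\<bar>D\<bar> + 1) (max B 0 / d)"
  have "\<bar>deriv W s\<bar> \<le> L * \<bar>s\<bar>" if "\<bar>s\<bar> \<le> R" for s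
  proof (cases "\<bar>s\<bar> < d")
    case True
    have "(\<bar>D\<bar> + 1) * \<bar>s\<bar> \<le> L * \<bar>s\<bar>" unfolding L_def by (intro mult_right_mono) auto
    with near[OF True] show ?thesis by linarith
  next
    case False
    have "\<bar>deriv W s\<bar> \<le> max B 0 / d * d" using B[of s] that \<open>d > 0\<close> by (simp add: abs_le_iff)
    also have "\<dots> \<le> max B 0 / d * \<bar>s\<bar>" using False \<open>d > 0\<close> by (intro mult_left_mono) auto
    also have "\<dots> \<le> L * \<bar>s\<bar>" unfolding L_def by (intro mult_right_mono) auto
    finally show ?thesis .
  qed
  moreover have "L \<ge> 0" unfolding L_def by simp
  ultimately show ?thesis by blast
qed

lemma abs_le_quadratic_if_deriv_vanishes:
  fixes W :: "real \<Rightarrow> real"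
  assumes W: "\<And>s. (W has_real_derivative deriv W s) (at s)" and "continuous_on UNIV (deriv W)"
    and "W 0 = 0" "deriv W 0 = 0" and "(deriv W has_real_derivative D) (at 0)"
  shows "\<exists>K. \<forall>s. \<bar>s\<bar> \<le> R \<longrightarrow> \<bar>W s\<bar> \<le> K * s\<^sup>2"
proof -
  obtain L where "L \<ge> 0" and L: "\<And>s. \<bar>s\<bar> \<le> R \<Longrightarrow> \<bar>deriv W s\<bar> \<le> L * \<bar>s\<bar>"
    using abs_deriv_le_linear[OF assms(2,4,5)] by blast
  have "\<bar>W s\<bar> \<le> L * s\<^sup>2" if s: "\<bar>s\<bar> \<le> R" for s
  proof -
    have "\<exists>z. \<bar>z\<bar> \<le> \<bar>s\<bar> \<and> W s = s * deriv W z"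
    proof (cases s "0::real" rule: linorder_cases)
      case less
      with MVT2[OF less, of W "deriv W"] W \<open>W 0 = 0\<close> show ?thesis
        by (metis abs_of_neg add.inverse_inverse diff_0 less_eq_real_def minus_diff_eq minus_mult_left neg_less_iff_less)
    next
      case greater
      with MVT2[OF greater, of W "deriv W"] W \<open>W 0 = 0\<close> show ?thesis
        by (metis abs_of_pos diff_zero less_eq_real_def)
    qed (use \<open>W 0 = 0\<close> in auto)
    then obtain z where z: "\<bar>z\<bar> \<le> \<bar>s\<bar>" and Ws: "W s = s * deriv W z" by blast
    have "\<bar>W s\<bar> = \<bar>s\<bar> * \<bar>deriv W z\<bar>" by (simp add: Ws abs_mult)
    also have "\<dots> \<le> \<bar>s\<bar> * (L * \<bar>s\<bar>)" using L[of z] z s \<open>L \<ge> 0\<close>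
      by (intro mult_left_mono order_trans[OF _ mult_left_mono[of "\<bar>z\<bar>" "\<bar>s\<bar>" L]]) auto
    finally show ?thesis by (simp add: power2_eq_square abs_mult_self_eq mult.assoc mult.left_commute[of L])
  qed
  then show ?thesis by blast
qed

lemma integrable_comp_L2fun:
  fixes W g :: "real \<Rightarrow> real"
  assumes [measurable]: "W \<in> borel_measurable borel" and W: "\<And>s. \<bar>s\<bar> \<le> R \<Longrightarrow> \<bar>W s\<bar> \<le> K * s\<^sup>2"
    and g: "L2fun g" and bound: "\<And>x. \<bar>g x\<bar> \<le> R"
  shows "integrable lborel (\<lambda>x. W (g x))"
proof (rule Bochner_Integration.integrable_bound[of lborel "\<lambda>x. K * (g x)\<^sup>2"])
  have [measurable]: "g \<in> borel_measurable borel" using g unfolding L2fun_def by simp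
  show "integrable lborel (\<lambda>x. K * (g x)\<^sup>2)" using g unfolding L2fun_def by simp
  show "(\<lambda>x. W (g x)) \<in> borel_measurable lborel" by measurable
  show "AE x in lborel. norm (W (g x)) \<le> norm (K * (g x)\<^sup>2)"
    using W[OF bound] by (auto intro!: AE_I2 order_trans[OF _ abs_ge_self])
qed

text \<open>Differentiation under the integral sign: the perturbation \<open>s h\<close> only changes the integrand on
  the compact support of \<open>h\<close>, where the Leibniz rule for continuous integrands applies.\<close>
lemma has_real_derivative_integral_comp:
  fixes W u h :: "real \<Rightarrow> real"
  assumes W: "\<And>s. (W has_real_derivative deriv W s) (at s)" and W': "continuous_on UNIV (deriv W)"
    and u: "continuous_on UNIV u" and h: "continuous_on UNIV h"
    and supp: "\<And>x. x \<notin> {A..B} \<Longrightarrow> h x = 0" and "A \<le> B"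
    and integrable: "\<And>s. integrable lborel (\<lambda>x. W (u x + s * h x))"
  shows "((\<lambda>s. LINT x|lborel. W (u x + s * h x)) has_real_derivative (LINT x|lborel. deriv W (u x) * h x)) (at 0)"
proof -
  have W_cont: "continuous_on UNIV W"
    using W by (meson DERIV_isCont continuous_at_imp_continuous_on)
  have cont: "continuous_on UNIV (\<lambda>x. W (u x + s * h x) - W (u x))" for s
    by (intro continuous_intros continuous_on_compose2[OF W_cont] u h) auto
  have split: "(LINT x|lborel. W (u x + s * h x))
      = (LINT x|lborel. W (u x)) + integral {A..B} (\<lambda>x. W (u x + s * h x) - W (u x))" for s
  proof -
    have "(LINT x|lborel. W (u x + s * h x)) - (LINT x|lborel. W (u x)) = (LINT x|lborel. W (u x + s * h x) - W (u x))"
      using Bochner_Integration.integral_diff[OF integrable[of s] integrable[of 0]] by simp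
    also have "\<dots> = integral {A..B} (\<lambda>x. W (u x + s * h x) - W (u x))"
      by (rule integral_eq_integral_support[OF cont _ \<open>A \<le> B\<close>]) (simp add: supp)
    finally show ?thesis by simp
  qed
  have "((\<lambda>s. integral (cbox A B) (\<lambda>x. W (u x + s * h x) - W (u x))) has_field_derivative
      integral (cbox A B) (\<lambda>x. deriv W (u x + 0 * h x) * h x)) (at 0 within UNIV)"
  proof (rule leibniz_rule_field_derivative[where fx="\<lambda>s x. deriv W (u x + s * h x) * h x"])
    fix s x
    have "((\<lambda>s. W (u x + s * h x)) has_real_derivative deriv W (u x + s * h x) * h x) (at s)"
      by (rule DERIV_chain2[OF W]) (auto intro!: derivative_eq_intros)
    then show "((\<lambda>s. W (u x + s * h x) - W (u x)) has_field_derivative deriv W (u x + s * h x) * h x) (at s within UNIV)"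
      by (auto intro!: derivative_eq_intros)
  next
    show "(\<lambda>x. W (u x + s * h x) - W (u x)) integrable_on cbox A B" for s
      by (rule integrable_continuous) (use cont in \<open>auto intro: continuous_on_subset\<close>)
  next
    have "continuous_on (UNIV \<times> cbox A B) (\<lambda>p. deriv W (u (snd p) + fst p * h (snd p)) * h (snd p))"
      by (intro continuous_intros continuous_on_compose2[OF W'] continuous_on_compose2[OF u]
          continuous_on_compose2[OF h]) auto
    then show "continuous_on (UNIV \<times> cbox A B) (\<lambda>(s, x). deriv W (u x + s * h x) * h x)"
      by (simp add: case_prod_beta)
  qed auto
  moreover have "integral {A..B} (\<lambda>x. deriv W (u x) * h x) = (LINT x|lborel. deriv W (u x) * h x)"
    by (rule integral_eq_integral_support[symmetric, OF _ _ \<open>A \<le> B\<close>])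
       (auto simp: supp intro!: continuous_intros continuous_on_compose2[OF W'] u h)
  ultimately have "((\<lambda>s. integral {A..B} (\<lambda>x. W (u x + s * h x) - W (u x))) has_real_derivative
      (LINT x|lborel. deriv W (u x) * h x)) (at 0)"
    by simp
  then have "((\<lambda>s. (LINT x|lborel. W (u x)) + integral {A..B} (\<lambda>x. W (u x + s * h x) - W (u x)))
      has_real_derivative 0 + (LINT x|lborel. deriv W (u x) * h x)) (at 0)"
    by (intro DERIV_add DERIV_const)
  then show ?thesis unfolding split[symmetric] by simp
qed

text \<open>Near the minimiser \<open>\<bar>C\<bar> = \<sigma> C\<close> with \<open>\<sigma> = sgn C\<close>, so the functional is differentiable there.\<close>
lemma stationary_energy_momentum_quotient:
  fixes Ef Cf :: "real \<Rightarrow> real"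
  assumes dE: "(Ef has_real_derivative E') (at 0)" and dC: "(Cf has_real_derivative C') (at 0)"
    and C0: "Cf 0 \<noteq> 0" and "\<delta> \<ge> 0"
    and min: "\<And>s. Cf s \<noteq> 0 \<Longrightarrow> Ef 0 / \<bar>Cf 0\<bar> + \<delta> * Ef 0 \<le> Ef s / \<bar>Cf s\<bar> + \<delta> * Ef s"
  shows "E' = Ef 0 / (Cf 0 * (1 + \<delta> * \<bar>Cf 0\<bar>)) * C'"
proof -
  define \<sigma> where "\<sigma> = sgn (Cf 0)"
  have \<sigma>: "\<sigma> * \<sigma> = 1" "\<sigma> * Cf 0 = \<bar>Cf 0\<bar>" using C0 unfolding \<sigma>_def by (auto simp: sgn_if)
  have pos0: "\<sigma> * Cf 0 > 0" using \<sigma> C0 by simp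
  have "((\<lambda>s. \<sigma> * Cf s) \<longlongrightarrow> \<sigma> * Cf 0) (at 0)"
    using DERIV_isCont[OF dC] unfolding isCont_def by (rule tendsto_mult_left)
  then have "\<forall>\<^sub>F s in at 0. \<sigma> * Cf s > 0"
    using pos0 by (rule order_tendstoD(1))
  then obtain d where "d > 0" and d: "\<And>s. s \<noteq> 0 \<Longrightarrow> \<bar>s\<bar> < d \<Longrightarrow> \<sigma> * Cf s > 0"
    by (auto simp: eventually_at dist_real_def)
  define g where "g s = Ef s / (\<sigma> * Cf s) + \<delta> * Ef s" for s
  have "(g has_real_derivative (E' * (\<sigma> * Cf 0) - Ef 0 * (\<sigma> * C')) / (\<sigma> * Cf 0 * (\<sigma> * Cf 0)) + \<delta> * E') (at 0)"
    unfolding g_def[abs_def]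
    by (intro DERIV_add DERIV_divide DERIV_cmult dE dC) (use pos0 in auto)
  moreover have "g 0 \<le> g s" if "\<bar>0 - s\<bar> < d" for s
  proof -
    have pos: "\<sigma> * Cf s > 0" using d[of s] that pos0 by (cases "s = 0") auto
    then have "\<bar>Cf s\<bar> = \<sigma> * Cf s" using \<sigma> unfolding \<sigma>_def by (auto simp: sgn_if split: if_splits)
    with min[of s] pos \<sigma> show ?thesis unfolding g_def by auto
  qed
  ultimately have "(E' * (\<sigma> * Cf 0) - Ef 0 * (\<sigma> * C')) / (\<sigma> * Cf 0 * (\<sigma> * Cf 0)) + \<delta> * E' = 0"
    using \<open>d > 0\<close> by (intro DERIV_local_min) auto
  then have "E' * \<bar>Cf 0\<bar> * (1 + \<delta> * \<bar>Cf 0\<bar>) = Ef 0 * \<sigma> * C'"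
    using pos0 \<sigma> by (simp add: field_simps power2_eq_square)
  then have "E' * (Cf 0 * (1 + \<delta> * \<bar>Cf 0\<bar>)) = Ef 0 * C'"
    using C0 by (cases "Cf 0 > 0") (auto simp: \<sigma>_def algebra_simps)
  moreover have "Cf 0 * (1 + \<delta> * \<bar>Cf 0\<bar>) \<noteq> 0"
    using C0 \<open>\<delta> \<ge> 0\<close> by (smt (verit) mult_nonneg_nonneg abs_ge_zero mult_eq_0_iff)
  ultimately show ?thesis by (simp add: field_simps)
qed

lemma higher_deriv_affine_comp:
  fixes us :: "nat \<Rightarrow> real \<Rightarrow> real"
  assumes us: "\<And>j y. j < n \<Longrightarrow> (us j has_real_derivative us (Suc j) y) (at y)"
  shows "j \<le> n \<Longrightarrow> (deriv ^^ j) (\<lambda>t. us 0 (p + q * t)) = (\<lambda>t. q ^ j * us j (p + q * t))"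
proof (induction j)
  case (Suc j)
  have chain: "((\<lambda>t. us j (p + q * t)) has_real_derivative us (Suc j) (p + q * t) * q) (at t)" for t
    by (rule DERIV_chain2[OF us]) (use Suc.prems in \<open>auto intro!: derivative_eq_intros\<close>)
  have "((\<lambda>t. q ^ j * us j (p + q * t)) has_real_derivative q ^ Suc j * us (Suc j) (p + q * t)) (at t)" for t
    using DERIV_cmult[OF chain, of "q ^ j"] by (rule DERIV_cong) (simp add: algebra_simps)
  then have "deriv (\<lambda>t. q ^ j * us j (p + q * t)) = (\<lambda>t. q ^ Suc j * us (Suc j) (p + q * t))"
    by (intro ext DERIV_imp_deriv)
  with Suc show ?case by simp
qed simp

lemma diff_upto_affine_comp:
  fixes us :: "nat \<Rightarrow> real \<Rightarrow> real"
  assumes us: "\<And>j y. j < n \<Longrightarrow> (us j has_real_derivative us (Suc j) y) (at y)"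
  shows "diff_upto n (\<lambda>t. us 0 (p + q * t))"
  unfolding diff_upto_def
proof (intro allI impI)
  fix j t assume "j < n"
  have chain: "((\<lambda>t. us j (p + q * t)) has_real_derivative us (Suc j) (p + q * t) * q) (at t)"
    by (rule DERIV_chain2[OF us]) (use \<open>j < n\<close> in \<open>auto intro!: derivative_eq_intros\<close>)
  have "((\<lambda>t. q ^ j * us j (p + q * t)) has_real_derivative q ^ Suc j * us (Suc j) (p + q * t)) (at t)"
    using DERIV_cmult[OF chain, of "q ^ j"] by (rule DERIV_cong) (simp add: algebra_simps)
  with \<open>j < n\<close> show "((deriv ^^ j) (\<lambda>t. us 0 (p + q * t)) has_real_derivative (deriv ^^ Suc j) (\<lambda>t. us 0 (p + q * t)) t) (at t)"
    using higher_deriv_affine_comp[where us=us and n=n, OF us, of j p q]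
      higher_deriv_affine_comp[where us=us and n=n, OF us, of "Suc j" p q] by simp
qed

section \<open>Euler--Lagrange equations of the minimiser\<close>

lemma energy_add_scaled_velocity:
  assumes "u \<in> H2" "L2fun v" "L2fun g"
  shows "energy W u (\<lambda>x. v x + s * g x)
    = energy W u v + s * (LINT x|lborel. v x * g x) + s\<^sup>2 / 2 * (LINT x|lborel. (g x)\<^sup>2)"
proof -
  have "(LINT x|lborel. (v x + s * g x)\<^sup>2 + (uxx u x)\<^sup>2)
      = (LINT x|lborel. ((v x)\<^sup>2 + (uxx u x)\<^sup>2) + (2 * s) * (v x * g x) + s\<^sup>2 * (g x)\<^sup>2)"
    by (rule Bochner_Integration.integral_cong) (auto simp: power2_eq_square algebra_simps)
  also have "\<dots> = (LINT x|lborel. (v x)\<^sup>2 + (uxx u x)\<^sup>2) + (2 * s) * (LINT x|lborel. v x * g x)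
      + s\<^sup>2 * (LINT x|lborel. (g x)\<^sup>2)"
    using assms uxx_H2(1)[OF assms(1)] integrable_mult_L2fun[OF assms(2,3)] unfolding L2fun_def by simp
  finally show ?thesis unfolding energy_def by (simp add: algebra_simps)
qed

lemma momentum_add_scaled_velocity:
  assumes "L2fun v" "L2fun g" "L2fun (deriv u)"
  shows "momentum u (\<lambda>x. v x + s * g x) = momentum u v - s * (LINT x|lborel. g x * deriv u x)"
  using integrable_mult_L2fun[OF assms(1,3)] integrable_mult_L2fun[OF assms(2,3)]
  by (simp add: momentum_def distrib_right mult.assoc)

lemma energy_add_scaled_displacement:
  assumes u: "u \<in> H2" and v: "L2fun v" and h: "L2fun h" "is_d2 h k" "L2fun k"
  shows "energy W (\<lambda>x. u x + s * h x) v
    = 1 / 2 * (LINT x|lborel. (v x)\<^sup>2 + (uxx u x)\<^sup>2) + s * (LINT x|lborel. uxx u x * k x)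
      + s\<^sup>2 / 2 * (LINT x|lborel. (k x)\<^sup>2) + (LINT x|lborel. W (u x + s * h x))"
proof -
  have u_s: "(\<lambda>x. u x + s * h x) \<in> H2" and AE: "AE x in lborel. uxx (\<lambda>x. u x + s * h x) x = uxx u x + s * k x"
    using H2_add_scaled[OF u h] by blast+
  have "(LINT x|lborel. (v x)\<^sup>2 + (uxx (\<lambda>x. u x + s * h x) x)\<^sup>2)
      = (LINT x|lborel. ((v x)\<^sup>2 + (uxx u x)\<^sup>2) + (2 * s) * (uxx u x * k x) + s\<^sup>2 * (k x)\<^sup>2)"
  proof (rule integral_cong_AE)
    show "(\<lambda>x. (v x)\<^sup>2 + (uxx (\<lambda>x. u x + s * h x) x)\<^sup>2) \<in> borel_measurable lborel"
      using uxx_H2(1)[OF u_s] v unfolding L2fun_def by auto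
    show "(\<lambda>x. ((v x)\<^sup>2 + (uxx u x)\<^sup>2) + (2 * s) * (uxx u x * k x) + s\<^sup>2 * (k x)\<^sup>2) \<in> borel_measurable lborel"
      using uxx_H2(1)[OF u] v h unfolding L2fun_def by auto
    show "AE x in lborel. (v x)\<^sup>2 + (uxx (\<lambda>x. u x + s * h x) x)\<^sup>2
        = ((v x)\<^sup>2 + (uxx u x)\<^sup>2) + (2 * s) * (uxx u x * k x) + s\<^sup>2 * (k x)\<^sup>2"
      using AE by (rule eventually_mono) (simp add: power2_eq_square algebra_simps)
  qed
  also have "\<dots> = (LINT x|lborel. (v x)\<^sup>2 + (uxx u x)\<^sup>2) + (2 * s) * (LINT x|lborel. uxx u x * k x)
      + s\<^sup>2 * (LINT x|lborel. (k x)\<^sup>2)"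
    using v h uxx_H2(1)[OF u] integrable_mult_L2fun[OF uxx_H2(1)[OF u] h(3)] unfolding L2fun_def by simp
  finally show ?thesis unfolding energy_def by (simp add: algebra_simps)
qed

lemma momentum_add_scaled_displacement:
  assumes "L2fun v" "L2fun (deriv u)" "L2fun (deriv h)"
    and "\<And>x. (u has_real_derivative deriv u x) (at x)" "\<And>x. (h has_real_derivative deriv h x) (at x)"
  shows "momentum (\<lambda>x. u x + s * h x) v = momentum u v - s * (LINT x|lborel. v x * deriv h x)"
proof -
  have "deriv (\<lambda>x. u x + s * h x) = (\<lambda>x. deriv u x + s * deriv h x)"
    using assms(4,5) by (intro ext DERIV_imp_deriv) (auto intro!: derivative_eq_intros)
  then show ?thesis
    using integrable_mult_L2fun[OF assms(1,2)] integrable_mult_L2fun[OF assms(1,3)]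
    by (simp add: momentum_def distrib_left mult.left_commute)
qed

locale beam_minimiser =
  fixes W :: "real \<Rightarrow> real" and \<delta> :: real and ud vd :: "real \<Rightarrow> real"
  assumes W_deriv: "\<And>s. (W has_real_derivative deriv W s) (at s)"
    and W'_cont: "continuous_on UNIV (deriv W)"
    and W_quadratic: "\<And>R. \<exists>K. \<forall>s. \<bar>s\<bar> \<le> R \<longrightarrow> \<bar>W s\<bar> \<le> K * s\<^sup>2"
    and delta_nonneg: "\<delta> \<ge> 0"
    and ud_H2: "ud \<in> H2" and vd_L2: "L2fun vd"
    and momentum_nonzero: "momentum ud vd \<noteq> 0"
    and minimiser: "\<forall>u\<in>H2. \<forall>v. L2fun v \<longrightarrow> momentum u v \<noteq> 0 \<longrightarrow> Jdelta \<delta> W ud vd \<le> Jdelta \<delta> W u v"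
begin

text \<open>The wave speed \<open>c\<close>: by Fermat's rule for \<open>J\<^sub>\<delta>\<close>, \<open>dE = c dC\<close> in every direction.\<close>
definition speed :: real where
  "speed = energy W ud vd / (momentum ud vd * (1 + \<delta> * \<bar>momentum ud vd\<bar>))"

lemma L2fun_ud: "L2fun ud"
  using ud_H2 by (simp add: H2_def)

lemma ud':
  shows "(ud has_real_derivative deriv ud x) (at x)" and "L2fun (deriv ud)"
    and "\<forall>x. deriv ud x = deriv ud 0 + (LBINT t=0..x. uxx ud t)"
proof -
  obtain u1 where u1: "\<forall>x. (ud has_real_derivative u1 x) (at x)" "L2fun u1"
      "\<forall>x. u1 x = u1 0 + (LBINT t=0..x. uxx ud t)"
    using uxx_H2(2)[OF ud_H2] unfolding is_d2_def by blast
  moreover have "deriv ud = u1" using u1(1) by (auto intro: DERIV_imp_deriv)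
  ultimately show "(ud has_real_derivative deriv ud x) (at x)" and "L2fun (deriv ud)"
    and "\<forall>x. deriv ud x = deriv ud 0 + (LBINT t=0..x. uxx ud t)" by blast+
qed

lemma continuous_on_ud: "continuous_on UNIV ud"
  using ud'(1) by (meson DERIV_isCont continuous_at_imp_continuous_on)

lemma continuous_on_ud': "continuous_on UNIV (deriv ud)"
  by (rule continuous_on_if_indefinite[OF uxx_H2(1)[OF ud_H2] ud'(3)])

lemma W_measurable [measurable]: "W \<in> borel_measurable borel"
  using W_deriv by (meson DERIV_isCont continuous_at_imp_continuous_on borel_measurable_continuous_onI)

lemma minimiser_stationary:
  assumes dE: "(Ef has_real_derivative E') (at 0)" and dC: "(Cf has_real_derivative C') (at 0)"
    and "Ef 0 = energy W ud vd" "Cf 0 = momentum ud vd"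
    and curve: "\<And>s. \<exists>u v. u \<in> H2 \<and> L2fun v \<and> energy W u v = Ef s \<and> momentum u v = Cf s"
  shows "E' = speed * C'"
proof -
  have "E' = Ef 0 / (Cf 0 * (1 + \<delta> * \<bar>Cf 0\<bar>)) * C'"
  proof (rule stationary_energy_momentum_quotient[OF dE dC _ delta_nonneg])
    fix s assume "Cf s \<noteq> 0"
    obtain u v where "u \<in> H2" "L2fun v" "energy W u v = Ef s" "momentum u v = Cf s"
      using curve by blast
    with \<open>Cf s \<noteq> 0\<close> minimiser have "Jdelta \<delta> W ud vd \<le> Jdelta \<delta> W u v" by auto
    with assms(3,4) \<open>energy W u v = Ef s\<close> \<open>momentum u v = Cf s\<close>
    show "Ef 0 / \<bar>Cf 0\<bar> + \<delta> * Ef 0 \<le> Ef s / \<bar>Cf s\<bar> + \<delta> * Ef s"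
      by (simp add: Jdelta_def)
  qed (use assms(4) momentum_nonzero in simp)
  then show ?thesis using assms(3,4) by (simp add: speed_def)
qed

lemma velocity_variation:
  assumes g: "L2fun g"
  shows "(LINT x|lborel. vd x * g x) = - speed * (LINT x|lborel. g x * deriv ud x)"
proof -
  define a where "a = (LINT x|lborel. vd x * g x)"
  define p where "p = (LINT x|lborel. g x * deriv ud x)"
  define b where "b = (LINT x|lborel. (g x)\<^sup>2)"
  have "a = speed * - p"
  proof (rule minimiser_stationary[where Ef="\<lambda>s. energy W ud vd + s * a + s\<^sup>2 / 2 * b"
        and Cf="\<lambda>s. momentum ud vd - s * p"])
    show "\<exists>u v. u \<in> H2 \<and> L2fun v \<and> energy W u v = energy W ud vd + s * a + s\<^sup>2 / 2 * b
        \<and> momentum u v = momentum ud vd - s * p" for s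
      using energy_add_scaled_velocity[OF ud_H2 vd_L2 g] momentum_add_scaled_velocity[OF vd_L2 g ud'(2)]
        ud_H2 vd_L2 g unfolding a_def b_def p_def by (blast intro: L2fun_add L2fun_cmult)
  qed (auto intro!: derivative_eq_intros)
  then show ?thesis unfolding a_def p_def by simp
qed

lemma velocity: "AE x in lborel. vd x = - speed * deriv ud x"
proof -
  define g where "g x = vd x + speed * deriv ud x" for x
  have g: "L2fun g" unfolding g_def by (intro L2fun_add L2fun_cmult vd_L2 ud'(2))
  have "(LINT x|lborel. (g x)\<^sup>2) = (LINT x|lborel. vd x * g x + speed * (g x * deriv ud x))"
    by (rule Bochner_Integration.integral_cong) (simp_all add: g_def power2_eq_square algebra_simps)
  also have "\<dots> = (LINT x|lborel. vd x * g x) + speed * (LINT x|lborel. g x * deriv ud x)"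
    using integrable_mult_L2fun[OF vd_L2 g] integrable_mult_L2fun[OF g ud'(2)] by simp
  also have "\<dots> = 0" by (simp add: velocity_variation[OF g])
  finally have "AE x in lborel. (g x)\<^sup>2 = 0"
    using g by (subst (asm) integral_nonneg_eq_0_iff_AE) (auto simp: L2fun_def)
  then show ?thesis by (rule eventually_mono) (simp add: g_def)
qed

lemma integrable_W_add_scaled:
  assumes "L2fun h" and bound: "\<And>x. \<bar>h x\<bar> \<le> C"
  shows "integrable lborel (\<lambda>x. W (ud x + s * h x))"
proof -
  obtain R where R: "\<And>x. \<bar>ud x\<bar> \<le> R"
    using bounded_if_L2fun_deriv[OF L2fun_ud ud'(2) ud'(1)] by blast
  obtain K where K: "\<And>y. \<bar>y\<bar> \<le> R + \<bar>s\<bar> * C \<Longrightarrow> \<bar>W y\<bar> \<le> K * y\<^sup>2"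
    using W_quadratic by blast
  have "\<bar>ud x + s * h x\<bar> \<le> R + \<bar>s\<bar> * C" for x
    using R[of x] mult_left_mono[OF bound[of x] abs_ge_zero[of s]] abs_triangle_ineq[of "ud x" "s * h x"]
    unfolding abs_mult by linarith
  then show ?thesis
    by (intro integrable_comp_L2fun[OF W_measurable K] L2fun_add L2fun_cmult L2fun_ud assms(1))
qed

lemma integral_velocity_mult:
  assumes "L2fun f"
  shows "(LINT x|lborel. vd x * f x) = - speed * (LINT x|lborel. deriv ud x * f x)"
proof -
  have "(LINT x|lborel. vd x * f x) = (LINT x|lborel. - speed * (deriv ud x * f x))"
  proof (rule integral_cong_AE)
    show "(\<lambda>x. vd x * f x) \<in> borel_measurable lborel"
      using integrable_mult_L2fun[OF vd_L2 assms] by (rule borel_measurable_integrable)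
    show "(\<lambda>x. - speed * (deriv ud x * f x)) \<in> borel_measurable lborel"
      using integrable_mult_L2fun[OF ud'(2) assms] by (auto intro: borel_measurable_integrable)
    show "AE x in lborel. vd x * f x = - speed * (deriv ud x * f x)"
      using velocity by (rule eventually_mono) simp
  qed
  then show ?thesis by simp
qed

lemma displacement_variation:
  assumes h: "L2fun h" "is_d2 h k" "L2fun k" and h_cont: "continuous_on UNIV h"
    and supp: "\<And>x. x \<notin> {A..B} \<Longrightarrow> h x = 0" "A \<le> B" and bound: "\<And>x. \<bar>h x\<bar> \<le> C"
  shows "(LINT x|lborel. uxx ud x * k x) + (LINT x|lborel. deriv W (ud x) * h x)
    = speed\<^sup>2 * (LINT x|lborel. deriv ud x * deriv h x)"
proof -
  obtain h1 where h1: "\<And>x. (h has_real_derivative h1 x) (at x)" "L2fun h1"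
    using h(2) unfolding is_d2_def by blast
  then have h': "\<And>x. (h has_real_derivative deriv h x) (at x)" "L2fun (deriv h)"
    using DERIV_imp_deriv by (metis, metis ext)
  define P where "P = (LINT x|lborel. (vd x)\<^sup>2 + (uxx ud x)\<^sup>2)"
  define a where "a = (LINT x|lborel. uxx ud x * k x)"
  define b where "b = (LINT x|lborel. (k x)\<^sup>2)"
  define q where "q = (LINT x|lborel. vd x * deriv h x)"
  define Ef where "Ef s = 1 / 2 * P + s * a + s\<^sup>2 / 2 * b + (LINT x|lborel. W (ud x + s * h x))" for s
  have "a + (LINT x|lborel. deriv W (ud x) * h x) = speed * - q"
  proof (rule minimiser_stationary[where Ef=Ef and Cf="\<lambda>s. momentum ud vd - s * q"])
    have "((\<lambda>s. LINT x|lborel. W (ud x + s * h x)) has_real_derivative (LINT x|lborel. deriv W (ud x) * h x)) (at 0)"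
      by (rule has_real_derivative_integral_comp[OF W_deriv W'_cont continuous_on_ud h_cont supp
            integrable_W_add_scaled[OF h(1) bound]])
    then show "(Ef has_real_derivative a + (LINT x|lborel. deriv W (ud x) * h x)) (at 0)"
      unfolding Ef_def[abs_def] by (auto intro!: derivative_eq_intros)
    show "Ef 0 = energy W ud vd" unfolding Ef_def P_def energy_def by simp
    show "\<exists>u v. u \<in> H2 \<and> L2fun v \<and> energy W u v = Ef s \<and> momentum u v = momentum ud vd - s * q" for s
      using H2_add_scaled(1)[OF ud_H2 h] vd_L2
        energy_add_scaled_displacement[OF ud_H2 vd_L2 h, of W s]
        momentum_add_scaled_displacement[OF vd_L2 ud'(2) h'(2) ud'(1) h'(1), of s]
      unfolding Ef_def P_def a_def b_def q_def by blast
  qed (auto intro!: derivative_eq_intros)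
  with integral_velocity_mult[OF h'(2)] show ?thesis
    unfolding a_def q_def by (simp add: power2_eq_square)
qed

text \<open>Testing the weak Euler--Lagrange equation with the quadratic B-splines turns all three
  integrals into third differences of (iterated) primitives.\<close>
lemma diff3_eq_0:
  assumes F1: "\<And>x. (F1 has_real_derivative deriv W (ud x)) (at x)"
    and F2: "\<And>x. (F2 has_real_derivative F1 x) (at x)" and F3: "\<And>x. (F3 has_real_derivative F2 x) (at x)"
    and U: "\<And>x. (U has_real_derivative ud x) (at x)" and "e > 0"
  shows "diff3 (\<lambda>x. deriv ud x + F3 x + speed\<^sup>2 * U x) a e = 0"
proof -
  let ?h = "bspline half_ramp_sq a e"
  obtain C where C: "\<And>x. \<bar>?h x\<bar> \<le> C"
    using bspline_bounded[OF spline_kernel_half_ramp_sq \<open>e > 0\<close>] by blast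
  have "deriv ?h = bspline ramp a e"
    using has_real_derivative_bspline[OF has_real_derivative_half_ramp_sq] by (intro ext DERIV_imp_deriv)
  then have "(LINT x|lborel. uxx ud x * bspline heaviside a e x) + (LINT x|lborel. deriv W (ud x) * ?h x)
      = speed\<^sup>2 * (LINT x|lborel. deriv ud x * bspline ramp a e x)"
    using displacement_variation[OF L2fun_bspline[OF spline_kernel_half_ramp_sq \<open>e > 0\<close>] is_d2_bspline[OF \<open>e > 0\<close>]
        L2fun_bspline[OF spline_kernel_heaviside \<open>e > 0\<close>] continuous_on_bspline[OF continuous_on_half_ramp_sq]
        bspline_eq_0[OF spline_kernel_half_ramp_sq \<open>e > 0\<close>] _ C]
    using \<open>e > 0\<close> by simp
  moreover have "(LINT x|lborel. uxx ud x * bspline heaviside a e x) = - diff3 (deriv ud) a e"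
    by (rule integral_mult_bspline_heaviside[OF uxx_H2(1)[OF ud_H2] ud'(3) \<open>e > 0\<close>])
  moreover have "(LINT x|lborel. deriv W (ud x) * ?h x) = - diff3 F3 a e"
    by (rule integral_mult_bspline_half_ramp_sq[OF _ F1 F2 F3 \<open>e > 0\<close>])
       (rule continuous_on_compose2[OF W'_cont continuous_on_ud], auto)
  moreover have "(LINT x|lborel. deriv ud x * bspline ramp a e x) = diff3 U a e"
    by (rule integral_mult_bspline_ramp[OF continuous_on_ud' ud'(1) U \<open>e > 0\<close>])
  ultimately show ?thesis by (simp add: diff3_def algebra_simps)
qed

lemma exists_antiderivative:
  fixes f :: "real \<Rightarrow> real"
  assumes "continuous_on UNIV f"
  shows "\<exists>F. \<forall>x. (F has_real_derivative f x) (at x)"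
proof -
  have "\<exists>F. \<forall>x::real. -\<infinity> < x \<longrightarrow> x < \<infinity> \<longrightarrow> (F has_vector_derivative f x) (at x)"
    by (rule einterval_antiderivative) (use assms in \<open>auto simp: continuous_on_eq_continuous_at\<close>)
  then show ?thesis by (auto simp: has_real_derivative_iff_has_vector_derivative)
qed

text \<open>Once \<open>u' + F\<^sub>3 + c\<^sup>2 U\<close> is known to be a quadratic polynomial, \<open>u'\<close> inherits two more
  derivatives from \<open>F\<^sub>3\<close> and \<open>U\<close>.\<close>
lemma derivative_chain:
  obtains us :: "nat \<Rightarrow> real \<Rightarrow> real"
  where "us 0 = ud" "us 1 = deriv ud"
    and "\<And>j y. j < 4 \<Longrightarrow> (us j has_real_derivative us (Suc j) y) (at y)"
    and "\<And>x. us 4 x + speed\<^sup>2 * us 2 x + deriv W (ud x) = 0"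
proof -
  let ?f = "\<lambda>x. deriv W (ud x)"
  have f: "continuous_on UNIV ?f" by (rule continuous_on_compose2[OF W'_cont continuous_on_ud]) auto
  obtain F1 where F1: "\<And>x. (F1 has_real_derivative ?f x) (at x)" using exists_antiderivative[OF f] by blast
  then have "continuous_on UNIV F1" by (meson DERIV_isCont continuous_at_imp_continuous_on)
  then obtain F2 where F2: "\<And>x. (F2 has_real_derivative F1 x) (at x)" using exists_antiderivative by blast
  then have "continuous_on UNIV F2" by (meson DERIV_isCont continuous_at_imp_continuous_on)
  then obtain F3 where F3: "\<And>x. (F3 has_real_derivative F2 x) (at x)" using exists_antiderivative by blast
  obtain U where U: "\<And>x. (U has_real_derivative ud x) (at x)"
    using exists_antiderivative[OF continuous_on_ud] by blast
  have "continuous_on UNIV F3" "continuous_on UNIV U"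
    using F3 U by (meson DERIV_isCont continuous_at_imp_continuous_on)+
  then have "continuous_on UNIV (\<lambda>x. deriv ud x + F3 x + speed\<^sup>2 * U x)"
    using continuous_on_ud' by (intro continuous_intros)
  then obtain \<alpha> \<beta> \<gamma> where "\<And>x. deriv ud x + F3 x + speed\<^sup>2 * U x = \<alpha> + \<beta> * x + \<gamma> * x\<^sup>2"
    using quadratic_if_diff3_eq_0 diff3_eq_0[OF F1 F2 F3 U] by blast
  then have ud'_eq: "deriv ud = (\<lambda>x. \<alpha> + \<beta> * x + \<gamma> * x\<^sup>2 - F3 x - speed\<^sup>2 * U x)"
    by (auto simp: algebra_simps)
  define u2 where "u2 x = \<beta> + 2 * \<gamma> * x - F2 x - speed\<^sup>2 * ud x" for x
  define u3 where "u3 x = 2 * \<gamma> - F1 x - speed\<^sup>2 * deriv ud x" for x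
  define u4 where "u4 x = - ?f x - speed\<^sup>2 * u2 x" for x
  have d2: "(deriv ud has_real_derivative u2 x) (at x)" for x
    unfolding ud'_eq u2_def using F3 U
    by (auto intro!: derivative_eq_intros simp: power2_eq_square algebra_simps)
  have d3: "(u2 has_real_derivative u3 x) (at x)" for x
    unfolding u2_def[abs_def] u3_def using F2 ud'(1)
    by (auto intro!: derivative_eq_intros)
  have d4: "(u3 has_real_derivative u4 x) (at x)" for x
    unfolding u3_def[abs_def] u4_def using F1 d2
    by (auto intro!: derivative_eq_intros)
  show thesis
  proof (rule that[of "nth [ud, deriv ud, u2, u3, u4]"])
    show "(nth [ud, deriv ud, u2, u3, u4] j has_real_derivative nth [ud, deriv ud, u2, u3, u4] (Suc j) y) (at y)"
      if "j < 4" for j y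
      using that ud'(1) d2 d3 d4 by (auto simp: less_Suc_eq numeral_eq_Suc)
  qed (simp_all add: u4_def numeral_eq_Suc)
qed

lemma travelling_wave:
  "diff_upto 4 ud \<and>
   (\<forall>x. (deriv ^^ 4) ud x + speed\<^sup>2 * (deriv ^^ 2) ud x + deriv W (ud x) = 0) \<and>
   beam_solution W (\<lambda>t x. ud (x - speed * t)) \<and>
   (AE x in lborel. deriv (\<lambda>t. ud (x - speed * t)) 0 = vd x)"
proof -
  obtain us where us: "us 0 = ud" "us 1 = deriv ud"
    and chain: "\<And>j y. j < 4 \<Longrightarrow> (us j has_real_derivative us (Suc j) y) (at y)"
    and ode: "\<And>x. us 4 x + speed\<^sup>2 * us 2 x + deriv W (ud x) = 0"
    by (rule derivative_chain) blast
  have chain2: "\<And>j y. j < 2 \<Longrightarrow> (us j has_real_derivative us (Suc j) y) (at y)"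
    using chain by simp
  have space: "(\<lambda>y. ud (y - speed * t)) = (\<lambda>y. us 0 (- speed * t + 1 * y))"
   and time: "(\<lambda>s. ud (x - speed * s)) = (\<lambda>s. us 0 (x + - speed * s))" for t x
    by (simp_all add: us algebra_simps)
  have derivs: "(deriv ^^ j) ud = us j" if "j \<le> 4" for j
    using higher_deriv_affine_comp[where us=us and n=4, OF chain that, of 0 1] by (simp add: us)
  show ?thesis unfolding beam_solution_def
  proof (intro conjI allI)
    show "diff_upto 4 ud"
      using diff_upto_affine_comp[where us=us and n=4 and p=0 and q=1, OF chain] by (simp add: us)
    show "(deriv ^^ 4) ud x + speed\<^sup>2 * (deriv ^^ 2) ud x + deriv W (ud x) = 0" for x
      using ode[of x] by (simp add: derivs)
    show "diff_upto 2 (\<lambda>s. ud (x - speed * s))" for x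
      unfolding time by (rule diff_upto_affine_comp[where us=us and n=2, OF chain2])
    show "diff_upto 4 (\<lambda>y. ud (y - speed * t))" for t
      unfolding space by (rule diff_upto_affine_comp[where us=us and n=4, OF chain])
    show "(deriv ^^ 2) (\<lambda>s. ud (x - speed * s)) t + (deriv ^^ 4) (\<lambda>y. ud (y - speed * t)) x
        + deriv W (ud (x - speed * t)) = 0" for t x
    proof -
      have "(deriv ^^ 2) (\<lambda>s. ud (x - speed * s)) = (\<lambda>s. (- speed) ^ 2 * us 2 (x + - speed * s))"
        using higher_deriv_affine_comp[where us=us and n=4, OF chain, of 2 x "- speed"] unfolding time by simp
      moreover have "(deriv ^^ 4) (\<lambda>y. ud (y - speed * t)) = (\<lambda>y. 1 ^ 4 * us 4 (- speed * t + 1 * y))"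
        using higher_deriv_affine_comp[where us=us and n=4, OF chain, of 4 "- speed * t" 1] unfolding space by simp
      ultimately show ?thesis using ode[of "x - speed * t"] by (simp add: us)
    qed
    show "AE x in lborel. deriv (\<lambda>t. ud (x - speed * t)) 0 = vd x"
      using velocity
    proof (rule eventually_mono)
      fix x assume "vd x = - speed * deriv ud x"
      then show "deriv (\<lambda>t. ud (x - speed * t)) 0 = vd x"
        using higher_deriv_affine_comp[where us=us and n=4, OF chain, of 1 x "- speed"]
        unfolding time by (simp add: us(2)[unfolded One_nat_def])
    qed
  qed
qed

end

theorem theorem3:
  fixes W :: "real \<Rightarrow> real" and \<delta> :: real and ud vd :: "real \<Rightarrow> real"
  assumes W_diff: "\<forall>s. W differentiable (at s)"
    and W_C1: "continuous_on UNIV (deriv W)"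
    and W_i: "\<exists>\<eta>>0. \<forall>s. (\<bar>s\<bar> \<le> 1 \<longrightarrow> W s \<ge> \<eta> * s\<^sup>2) \<and> (\<bar>s\<bar> \<ge> 1 \<longrightarrow> W s \<ge> \<eta>)"
    and W_ii: "(deriv W has_real_derivative 1) (at 0)"
    and W_iii: "\<exists>M>0. \<exists>\<alpha>. 0 \<le> \<alpha> \<and> \<alpha> < 2 \<and> (\<forall>s\<ge>0. W s \<le> M * s powr \<alpha>)"
    and delta_pos: "\<delta> > 0"
    and ud_H2: "ud \<in> H2" and vd_L2: "L2fun vd"
    and C_nz: "momentum ud vd \<noteq> 0"
    and minimizer: "\<forall>u\<in>H2. \<forall>v. L2fun v \<longrightarrow> momentum u v \<noteq> 0 \<longrightarrow>
                      Jdelta \<delta> W ud vd \<le> Jdelta \<delta> W u v"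
  shows "\<exists>c::real.
           diff_upto 4 ud \<and>
           (\<forall>x. (deriv ^^ 4) ud x + c\<^sup>2 * (deriv ^^ 2) ud x + deriv W (ud x) = 0) \<and>
           beam_solution W (\<lambda>t x. ud (x - c * t)) \<and>
           (AE x in lborel. deriv (\<lambda>t. ud (x - c * t)) 0 = vd x)"
proof -
  have W': "(W has_real_derivative deriv W s) (at s)" for s
    using W_diff DERIV_deriv_iff_real_differentiable by blast
  have W_nonneg: "W s \<ge> 0" for s
    using W_i by (smt (verit) zero_le_power2 mult_nonneg_nonneg)
  have W_0: "W 0 = 0"
    using W_iii W_nonneg[of 0] by force
  have W'_0: "deriv W 0 = 0"
    by (rule DERIV_local_min[OF W', of 1]) (auto simp: W_0 W_nonneg)
  interpret beam_minimiser W \<delta> ud vd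
  proof
    show "\<exists>K. \<forall>s. \<bar>s\<bar> \<le> R \<longrightarrow> \<bar>W s\<bar> \<le> K * s\<^sup>2" for R
      by (rule abs_le_quadratic_if_deriv_vanishes[OF W' W_C1 W_0 W'_0 W_ii])
  qed (use W' W_C1 delta_pos ud_H2 vd_L2 C_nz minimizer in auto)
  show ?thesis using travelling_wave by blast
qed

end
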